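(* Assume the standing assumptions below and in addition that $\mathbb{P}_x(\exists t>0,\ X_t=y)>0$ for all $x,y>0$. Then for every $x\ge0$, $$\mathbb{P}_x\Big(\tau_0<+\infty\ \text{ or }\ \lim_{t\to\infty}X_t=+\infty\Big)=1;$$ equivalently, almost surely either $\mathcal{H}(\mathbb{T})=\infty$ (and then $\mathcal{L}(\mathbb{T})=\infty$) or $\mathcal{L}(\mathbb{T})<\infty$. Moreover, $$\big(\exists x>0,\ \mathbb{P}_x(\tau_0=+\infty)>0\big)\iff\big(\forall x>0,\ \mathbb{P}_x(\tau_0=+\infty)>0\big).$$
   Context: Standing setting. Let $b:\mathbb{R}_+\to\mathbb{R}_+$ be measurable and locally bounded (birth rate), and let $K(x,dy)$ be a Markov kernel from $\mathbb{R}_+$ to probability measures on $(0,\infty]$ (lifetime kernel) such that $x\mapsto\int f(y)K(x,dy)$ is continuous for every bounded continuous $f$. The inhomogeneous splitting tree $\mathbb{T}$ with parameters $(b,K)$: under $\mathbb{P}_x$ the ancestor is born at time $0$ with lifetime $x$; an individual born at time $B$ with lifetime $\xi$ is alive on $(B,B+\xi]$ and gives birth to one child at each atom in $(B,B+\xi]$ of a Poisson point process with intensity $b(t)dt$; a child born at time $s$ gets a lifetime with law $K(s,\cdot)$; everything independent given birth times. $\mathcal{H}(\mathbb{T})$ is the supremum of all death times; $\mathcal{L}(\mathbb{T})$ is the sum of all lifetimes. The contour process $X$ is the Markov process on $\mathbb{R}_+$ which under $\mathbb{P}_x$ starts at $x$, decreases at unit speed, jumps when at position $z$ at rate $b(z)$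 with jump size distributed according to $K(z,\cdot)$, and is absorbed at $0$; it has the law of the contour (JCCP) of $\mathbb{T}$, which reaches $0$ exactly at time $\mathcal{L}(\mathbb{T})$. $\tau_0=\inf\{r\ge0:X_r=0\}$. *)

theory Defs
  imports "HOL-Probability.Probability"
begin

text \<open>Explicit construction of the contour process X of the inhomogeneous splitting
tree with parameters (b,K), driven by an i.i.d. sequence of pairs (E_n,U_n) with
E_n ~ Exp(1) and U_n ~ Uniform(0,1) (all independent).\<close>

definition noise :: "(nat \<Rightarrow> real \<times> real) measure" where
  "noise = (\<Pi>\<^sub>M n\<in>UNIV. (density lborel (exponential_density 1)
                 \<Otimes>\<^sub>M uniform_measure lborel {0<..<1}))"

definition hazard :: "(real \<Rightarrow> real) \<Rightarrow> real \<Rightarrow> real \<Rightarrow> real" where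
  "hazard b z s = (LINT u:{z - s<..z}|lborel. b u)"

definition lquantile :: "(real \<Rightarrow> ereal measure) \<Rightarrow> real \<Rightarrow> real \<Rightarrow> ereal" where
  "lquantile K w u = Inf {y::ereal. u \<le> measure (K w) {..y}}"

text \<open>One step of the embedded chain (position right after a jump, time of that jump).
  From level z>0 the process descends at unit speed; a jump occurs after descending by
  S = inf{s. E \<le> hazard z s} (so it occurs with rate b at the current level), the new
  position being (z - S) + (lifetime drawn from K(z - S, .)); if hazard z z < E the process
  reaches 0 at time t + z.\<close>
definition cstep :: "(real \<Rightarrow> real) \<Rightarrow> (real \<Rightarrow> ereal measure) \<Rightarrow> real \<times> real
                     \<Rightarrow> ereal \<times> ereal \<Rightarrow> ereal \<times> ereal" where
  "cstep b K eu zt =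
     (let e = fst eu; u = snd eu; z = fst zt; t = snd zt in
      if z = 0 \<or> z = \<infinity> then (z, \<infinity>)
      else (let r = real_of_ereal z in
            if hazard b r r < e then (0, t + ereal r)
            else (let S = Inf {s\<in>{0..r}. e \<le> hazard b r s}; w = r - S
                  in (ereal w + lquantile K w u, t + ereal S))))"

primrec chain :: "(real \<Rightarrow> real) \<Rightarrow> (real \<Rightarrow> ereal measure) \<Rightarrow> real
                   \<Rightarrow> (nat \<Rightarrow> real \<times> real) \<Rightarrow> nat \<Rightarrow> ereal \<times> ereal" where
  "chain b K x \<omega> 0 = (ereal x, 0)"
| "chain b K x \<omega> (Suc n) = cstep b K (\<omega> n) (chain b K x \<omega> n)"

text \<open>The contour process X_t (started at x under P_x); after an explosion
  (accumulation of jump times) it is set to +infinity.\<close>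
definition contour :: "(real \<Rightarrow> real) \<Rightarrow> (real \<Rightarrow> ereal measure) \<Rightarrow> real
                       \<Rightarrow> (nat \<Rightarrow> real \<times> real) \<Rightarrow> real \<Rightarrow> ereal" where
  "contour b K x \<omega> t =
     (if \<exists>n. ereal t < snd (chain b K x \<omega> (Suc n)) then
        (let n = (LEAST n. ereal t < snd (chain b K x \<omega> (Suc n)));
             z = fst (chain b K x \<omega> n); s = snd (chain b K x \<omega> n) in
         if z = \<infinity> then \<infinity> else if z = 0 then 0 else z - (ereal t - s))
      else \<infinity>)"

definition tau0 :: "(real \<Rightarrow> real) \<Rightarrow> (real \<Rightarrow> ereal measure) \<Rightarrow> real
                    \<Rightarrow> (nat \<Rightarrow> real \<times> real) \<Rightarrow> ereal" where
  "tau0 b K x \<omega> = Inf {ereal r | r. 0 \<le> r \<and> contour b K x \<omega> r = 0}"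

end

theory Submission
  imports Defs
begin

text \<open>Between jumps the contour descends at unit speed; from level z the next jump comes after a
  descent by the amount at which the integrated birth rate G over the descended interval reaches
  an Exp(1) clock, and if the clock exceeds \<open>G z\<close> the contour reaches 0 instead.

  Fix a level M. Whenever a step goes below M, memorylessness of the clock gives conditional
  probability at least \<open>exp (- G M)\<close> that the same step reaches 0. Steps reaching 0 are
  disjoint events, so the steps going below M have summable probabilities, and by Borel--Cantelli
  almost surely only finitely many of them occur. Hence almost surely the chain is absorbed at 0,
  jumps to an infinite lifetime, explodes in finite time, or the minima of its descents tend to
  infinity; that is, \<open>\<tau>\<^sub>0 < \<infinity>\<close> or \<open>X\<^sub>t \<rightarrow> \<infinity>\<close>.

  If the contour started at x reaches y with positive probability, then with positive probability
  some step passes level y, and from that moment the chain restarts from y with fresh noise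
  (memorylessness again). So survival from y forces survival from x.\<close>

section \<open>The integrated birth rate and the jump mechanism\<close>

definition cum_rate :: "(real \<Rightarrow> real) \<Rightarrow> real \<Rightarrow> real" where
  "cum_rate b x = (LINT u:{0<..x}|lborel. b u)"

text \<open>The descent S of cstep, made total (0 where no jump occurs) so that it is jointly
  measurable in the clock e and the level r.\<close>
definition jump_descent :: "(real \<Rightarrow> real) \<Rightarrow> real \<Rightarrow> real \<Rightarrow> real" where
  "jump_descent b e r =
     (if r < 0 \<or> cum_rate b r < e then 0 else Inf {s\<in>{0..r}. e \<le> hazard b r s})"

locale splitting_params =
  fixes b :: "real \<Rightarrow> real" and K :: "real \<Rightarrow> ereal measure"
  assumes b_meas: "b \<in> borel_measurable (restrict_space borel {0..})"
    and b_nonneg: "\<forall>x\<ge>0. 0 \<le> b x"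
    and b_locbdd: "\<forall>c\<ge>0. \<exists>B. \<forall>x\<in>{0..c}. b x \<le> B"
    and K_prob: "\<forall>x\<ge>0. prob_space (K x) \<and> sets (K x) = sets borel"
    and K_pos: "\<forall>x\<ge>0. emeasure (K x) {..0} = 0"
    and K_meas: "\<forall>A\<in>sets (borel :: ereal measure).
                   (\<lambda>x. emeasure (K x) A) \<in> borel_measurable (restrict_space borel {0..})"
begin

abbreviation "G \<equiv> cum_rate b"

lemma set_integrable_rate:
  assumes A: "A \<in> sets borel" "A \<subseteq> {0..c}"
  shows "set_integrable lborel A b"
proof -
  obtain B where B: "\<forall>x\<in>{0..max c 0}. b x \<le> B"
    using b_locbdd[rule_format, of "max c 0"] by auto
  have "(\<lambda>x. indicator {0..} x * b x) \<in> borel_measurable borel"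
    using b_meas borel_measurable_restrict_space_iff[of "{0..}" borel b] by simp
  moreover have "(\<lambda>x. indicator A x * b x) = (\<lambda>x. indicator A x * (indicator {0..} x * b x))"
    using A by (auto simp: indicator_def fun_eq_iff)
  ultimately have m: "(\<lambda>x. indicator A x * b x) \<in> borel_measurable borel"
    using A by simp
  show ?thesis unfolding set_integrable_def
  proof (rule integrableI_bounded_set[where A="{0..max c 0}" and B=B])
    show "(\<lambda>x. indicat_real A x *\<^sub>R b x) \<in> borel_measurable lborel" using m by simp
    show "AE x in lborel. x \<notin> {0..max c 0} \<longrightarrow> indicat_real A x *\<^sub>R b x = 0"
      by (rule AE_I2) (use A in \<open>auto simp: indicator_def\<close>)
    show "AE x in lborel. x \<in> {0..max c 0} \<longrightarrow> norm (indicat_real A x *\<^sub>R b x) \<le> B"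
    proof (rule AE_I2, intro impI)
      fix x assume "x \<in> {0..max c 0}"
      then have "0 \<le> b x" "b x \<le> B" using B b_nonneg by auto
      then show "norm (indicat_real A x *\<^sub>R b x) \<le> B" by (auto simp: indicator_def)
    qed
  qed auto
qed

lemma cum_rate_nonneg: "0 \<le> G x"
  unfolding cum_rate_def set_lebesgue_integral_def
  by (intro integral_nonneg_AE AE_I2) (use b_nonneg in \<open>auto simp: indicator_def\<close>)

lemma cum_rate_nonpos_arg: "x \<le> 0 \<Longrightarrow> G x = 0"
  unfolding cum_rate_def set_lebesgue_integral_def by simp

lemma cum_rate_split:
  assumes "0 \<le> y" "y \<le> x"
  shows "G x = G y + (LINT u:{y<..x}|lborel. b u)"
proof -
  have "{0<..x} = {0<..y} \<union> {y<..x}" using assms by auto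
  moreover have "set_integrable lborel {0<..y} b" by (rule set_integrable_rate[of _ y]) auto
  moreover have "set_integrable lborel {y<..x} b" by (rule set_integrable_rate[of _ x]) (use assms in auto)
  ultimately show ?thesis
    unfolding cum_rate_def by (simp add: set_integral_Un[of "{0<..y}" "{y<..x}"])
qed

lemma hazard_eq_cum_rate:
  assumes "0 \<le> s" "s \<le> r"
  shows "hazard b r s = G r - G (r - s)"
  using cum_rate_split[of "r - s" r] assms unfolding hazard_def by simp

lemma hazard_full: "hazard b r r = G r"
  unfolding hazard_def cum_rate_def by simp

lemma cum_rate_mono: "x \<le> y \<Longrightarrow> G x \<le> G y"
proof (cases "0 \<le> x")
  case True
  assume "x \<le> y"
  moreover have "0 \<le> (LINT u:{x<..y}|lborel. b u)"
    unfolding set_lebesgue_integral_def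
    by (intro integral_nonneg_AE AE_I2) (use b_nonneg True in \<open>auto simp: indicator_def\<close>)
  ultimately show ?thesis using cum_rate_split[OF True \<open>x \<le> y\<close>] by linarith
qed (simp add: cum_rate_nonpos_arg cum_rate_nonneg)

lemma measurable_cum_rate[measurable]: "G \<in> borel_measurable borel"
  by (rule borel_measurable_mono) (auto simp: mono_def cum_rate_mono)

lemma hazard_mono:
  assumes "0 \<le> s" "s \<le> s'" "s' \<le> r"
  shows "hazard b r s \<le> hazard b r s'"
  using assms by (simp add: hazard_eq_cum_rate cum_rate_mono)

lemma hazard_le_cum_rate: "0 \<le> s \<Longrightarrow> s \<le> r \<Longrightarrow> hazard b r s \<le> G r"
  using cum_rate_nonneg[of "r - s"] by (simp add: hazard_eq_cum_rate)

lemma jump_descent_eq: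
  assumes "0 \<le> r" "e \<le> G r"
  shows "jump_descent b e r = Inf {s\<in>{0..r}. e \<le> hazard b r s}"
  using assms unfolding jump_descent_def by simp

lemma
  assumes "0 \<le> r" "e \<le> G r"
  shows level_mem_jump_descent_set: "r \<in> {s\<in>{0..r}. e \<le> hazard b r s}"
    and jump_descent_set_bdd: "bdd_below {s\<in>{0..r}. e \<le> hazard b r s}"
  using assms by (auto simp: hazard_full intro: bdd_belowI[of _ 0])

lemma jump_descent_nonneg: "0 \<le> jump_descent b e r"
proof (cases "r < 0 \<or> G r < e")
  case False
  then show ?thesis using level_mem_jump_descent_set[of r e]
    by (auto simp: jump_descent_eq intro: cInf_greatest)
qed (simp add: jump_descent_def)

lemma jump_descent_le_level: "jump_descent b e r \<le> max 0 r"
proof (cases "r < 0 \<or> G r < e")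
  case False
  then have "jump_descent b e r \<le> r"
    using level_mem_jump_descent_set[of r e] jump_descent_set_bdd[of r e]
    by (simp add: jump_descent_eq cInf_lower)
  then show ?thesis by simp
qed (simp add: jump_descent_def)

lemma jump_descent_le:
  assumes "0 \<le> s" "s \<le> r" "e \<le> hazard b r s"
  shows "jump_descent b e r \<le> s"
proof -
  have "e \<le> G r" using assms hazard_le_cum_rate[of s r] by simp
  then show ?thesis using assms jump_descent_set_bdd[of r e]
    by (simp add: jump_descent_eq cInf_lower)
qed

lemma hazard_less_before_jump:
  assumes "0 \<le> s" "s < jump_descent b e r"
  shows "hazard b r s < e"
proof (rule ccontr)
  assume "\<not> hazard b r s < e"
  moreover have "s \<le> r" using assms jump_descent_le_level[of e r] by linarith
  ultimately have "jump_descent b e r \<le> s" using assms(1) by (intro jump_descent_le) auto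
  then show False using assms by simp
qed

lemma jump_descent_less_iff_rat:
  assumes r: "0 \<le> r" "e \<le> G r"
  shows "jump_descent b e r < c \<longleftrightarrow> r < c \<or> (\<exists>q::rat. 0 \<le> real_of_rat q \<and> real_of_rat q < c \<and>
    real_of_rat q \<le> r \<and> e \<le> G r - G (r - real_of_rat q))" (is "_ \<longleftrightarrow> ?R")
proof
  assume "jump_descent b e r < c"
  then obtain s where "s \<in> {s\<in>{0..r}. e \<le> hazard b r s}" "s < c"
    using cInf_less_iff[OF _ jump_descent_set_bdd[OF r]] level_mem_jump_descent_set[OF r]
    unfolding jump_descent_eq[OF r] by blast
  then have s: "0 \<le> s" "s \<le> r" "e \<le> hazard b r s" "s < c" by auto
  show ?R
  proof (cases "r < c")
    case False
    obtain q where q: "s < real_of_rat q" "real_of_rat q < c" using of_rat_dense[OF s(4)] by blast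
    then have "0 \<le> real_of_rat q" "real_of_rat q \<le> r" using s False by linarith+
    moreover have "e \<le> hazard b r (real_of_rat q)"
      using s q hazard_mono[of s "real_of_rat q" r] \<open>real_of_rat q \<le> r\<close> by linarith
    ultimately show ?R using q by (auto simp: hazard_eq_cum_rate)
  qed simp
next
  assume ?R
  then show "jump_descent b e r < c"
  proof
    assume "r < c"
    then show ?thesis using jump_descent_le_level[of e r] r(1) by simp
  next
    assume "\<exists>q::rat. 0 \<le> real_of_rat q \<and> real_of_rat q < c \<and>
        real_of_rat q \<le> r \<and> e \<le> G r - G (r - real_of_rat q)"
    then obtain q :: rat where q: "0 \<le> real_of_rat q" "real_of_rat q < c" "real_of_rat q \<le> r"
        "e \<le> G r - G (r - real_of_rat q)"
      by blast
    then have "jump_descent b e r \<le> real_of_rat q"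
      by (intro jump_descent_le) (simp_all add: hazard_eq_cum_rate)
    then show ?thesis using q(2) by simp
  qed
qed

lemma jump_descent_less_iff:
  "jump_descent b e r < c \<longleftrightarrow>
     ((r < 0 \<or> G r < e) \<and> 0 < c) \<or>
     (\<not> (r < 0 \<or> G r < e) \<and> (r < c \<or> (\<exists>q::rat. 0 \<le> real_of_rat q \<and> real_of_rat q < c \<and>
        real_of_rat q \<le> r \<and> e \<le> G r - G (r - real_of_rat q))))"
proof (cases "r < 0 \<or> G r < e")
  case False
  then show ?thesis using jump_descent_less_iff_rat[of r e c] by simp
qed (simp add: jump_descent_def)

lemma measurable_jump_descent[measurable (raw)]:
  assumes "f \<in> borel_measurable M" "g \<in> borel_measurable M"
  shows "(\<lambda>x. jump_descent b (f x) (g x)) \<in> borel_measurable M"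
proof -
  have "(\<lambda>p. jump_descent b (fst p) (snd p)) \<in> borel_measurable (borel \<Otimes>\<^sub>M borel)"
  proof (subst borel_measurable_iff_less, intro allI)
    fix c
    show "{p \<in> space (borel \<Otimes>\<^sub>M borel). jump_descent b (fst p) (snd p) < c} \<in> sets (borel \<Otimes>\<^sub>M borel)"
      unfolding jump_descent_less_iff by measurable
  qed
  from measurable_compose[OF measurable_Pair[OF assms] this] show ?thesis by simp
qed

lemma measurable_measure_K[measurable (raw)]:
  assumes "A \<in> sets (borel :: ereal measure)" "f \<in> borel_measurable M"
  shows "(\<lambda>x. measure (K (max 0 (f x))) A) \<in> borel_measurable M"
proof -
  have "(\<lambda>w::real. max 0 w) \<in> borel \<rightarrow>\<^sub>M restrict_space borel {0..}"
    by (rule measurable_restrict_space2) auto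
  from measurable_compose[OF this K_meas[rule_format, OF assms(1)]]
  have "(\<lambda>w. measure (K (max 0 w)) A) \<in> borel_measurable borel"
    unfolding measure_def by measurable
  from measurable_compose[OF assms(2) this] show ?thesis .
qed

lemma K_atMost_mono:
  assumes "0 \<le> w" "y1 \<le> y2"
  shows "measure (K w) {..y1} \<le> measure (K w) {..y2}"
proof -
  interpret prob_space "K w" using K_prob assms by auto
  show ?thesis using K_prob assms by (intro finite_measure_mono) auto
qed

lemma lquantile_less_iff:
  assumes w: "0 \<le> w"
  shows "lquantile K w u < y \<longleftrightarrow> (-\<infinity> < y \<and> u \<le> measure (K w) {..-\<infinity>}) \<or>
      (\<exists>q::rat. ereal (real_of_rat q) < y \<and> u \<le> measure (K w) {..ereal (real_of_rat q)})"
proof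
  assume "lquantile K w u < y"
  then obtain y' where y': "u \<le> measure (K w) {..y'}" "y' < y"
    unfolding lquantile_def Inf_less_iff by auto
  show "(-\<infinity> < y \<and> u \<le> measure (K w) {..-\<infinity>}) \<or>
      (\<exists>q::rat. ereal (real_of_rat q) < y \<and> u \<le> measure (K w) {..ereal (real_of_rat q)})"
  proof (cases y')
    case (real v)
    obtain q where q: "v < real_of_rat q" "ereal (real_of_rat q) < y"
    proof (cases y)
      case (real v')
      then have "v < v'" using y' \<open>y' = ereal v\<close> by simp
      from of_rat_dense[OF this] obtain q where "v < real_of_rat q" "real_of_rat q < v'" by blast
      then show ?thesis using that real by auto
    next
      case PInf
      from of_rat_dense[of v "v + 1"] obtain q where "v < real_of_rat q" by auto
      then show ?thesis using that PInf by auto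
    qed (use y' in simp)
    have "u \<le> measure (K w) {..ereal (real_of_rat q)}"
      using y'(1) K_atMost_mono[OF w, of y' "ereal (real_of_rat q)"] q real by simp
    then show ?thesis using q by blast
  qed (use y' in simp_all)
next
  assume "(-\<infinity> < y \<and> u \<le> measure (K w) {..-\<infinity>}) \<or>
      (\<exists>q::rat. ereal (real_of_rat q) < y \<and> u \<le> measure (K w) {..ereal (real_of_rat q)})"
  then obtain y' where "y' < y" "u \<le> measure (K w) {..y'}" by blast
  moreover have "lquantile K w u \<le> y'" if "u \<le> measure (K w) {..y'}"
    unfolding lquantile_def by (rule Inf_lower) (use that in simp)
  ultimately show "lquantile K w u < y" by (meson le_less_trans)
qed

lemma measurable_lquantile[measurable (raw)]:
  assumes "f \<in> borel_measurable M" "g \<in> borel_measurable M"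
  shows "(\<lambda>x. lquantile K (max 0 (f x)) (g x)) \<in> borel_measurable M"
proof -
  have "(\<lambda>p. lquantile K (max 0 (fst p)) (snd p)) \<in> borel_measurable (borel \<Otimes>\<^sub>M borel)"
  proof (subst borel_measurable_ereal_iff_Iio, intro allI)
    fix y :: ereal
    have "(\<lambda>p. lquantile K (max 0 (fst p)) (snd p)) -` {..<y} \<inter> space (borel \<Otimes>\<^sub>M borel) =
      {p \<in> space (borel \<Otimes>\<^sub>M borel). (-\<infinity> < y \<and> snd p \<le> measure (K (max 0 (fst p))) {..-\<infinity>}) \<or>
        (\<exists>q::rat. ereal (real_of_rat q) < y \<and>
           snd p \<le> measure (K (max 0 (fst p))) {..ereal (real_of_rat q)})}"
      using lquantile_less_iff[of "max 0 _"] by auto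
    then show "(\<lambda>p. lquantile K (max 0 (fst p)) (snd p)) -` {..<y} \<inter> space (borel \<Otimes>\<^sub>M borel)
        \<in> sets (borel \<Otimes>\<^sub>M borel)"
      by simp measurable
  qed
  from measurable_compose[OF measurable_Pair[OF assms] this] show ?thesis by simp
qed

lemma lquantile_nonneg_or_minf:
  assumes w: "0 \<le> w"
  shows "lquantile K w u = -\<infinity> \<or> 0 \<le> lquantile K w u"
proof (cases "u \<le> 0")
  case True
  have "lquantile K w u = Inf UNIV" unfolding lquantile_def
    by (rule arg_cong[where f=Inf]) (use True in \<open>auto intro: order_trans[OF _ measure_nonneg]\<close>)
  then show ?thesis by (simp add: bot_ereal_def)
next
  case False
  interpret prob_space "K w" using K_prob w by auto
  have "0 \<le> lquantile K w u" unfolding lquantile_def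
  proof (rule Inf_greatest)
    fix y assume y: "y \<in> {y. u \<le> measure (K w) {..y}}"
    show "0 \<le> y"
    proof (rule ccontr)
      assume "\<not> 0 \<le> y"
      then have "measure (K w) {..y} \<le> measure (K w) {..0}"
        using K_atMost_mono[OF w, of y 0] by simp
      moreover have "measure (K w) {..0} = 0" using K_pos w by (simp add: measure_def)
      ultimately show False using y False by simp
    qed
  qed
  then show ?thesis by simp
qed

end

section \<open>The embedded chain of levels and jump times\<close>

text \<open>The two components of cstep, written with \<open>max 0 (real_of_ereal z)\<close> in place of
  \<open>real_of_ereal z\<close> (the same on the levels the chain visits) so that they are total and
  measurable.\<close>
definition step_duration :: "(real \<Rightarrow> real) \<Rightarrow> real \<times> real \<Rightarrow> ereal \<Rightarrow> real" where
  "step_duration b a z =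
     (if cum_rate b (max 0 (real_of_ereal z)) < fst a then max 0 (real_of_ereal z)
      else jump_descent b (fst a) (max 0 (real_of_ereal z)))"

definition next_level :: "(real \<Rightarrow> real) \<Rightarrow> (real \<Rightarrow> ereal measure) \<Rightarrow> real \<times> real \<Rightarrow> ereal \<Rightarrow> ereal" where
  "next_level b K a z =
     (if z = 0 \<or> z = \<infinity> then z
      else if cum_rate b (max 0 (real_of_ereal z)) < fst a then 0
      else ereal (max 0 (real_of_ereal z) - step_duration b a z)
        + lquantile K (max 0 (max 0 (real_of_ereal z) - step_duration b a z)) (snd a))"

definition next_time :: "(real \<Rightarrow> real) \<Rightarrow> real \<times> real \<Rightarrow> ereal \<Rightarrow> ereal \<Rightarrow> ereal" where
  "next_time b a z t = (if z = 0 \<or> z = \<infinity> then \<infinity> else t + ereal (step_duration b a z))"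

text \<open>The chain of cstep started at an arbitrary level, so that it can be restarted.\<close>
primrec levels :: "(real \<Rightarrow> real) \<Rightarrow> (real \<Rightarrow> ereal measure) \<Rightarrow> ereal \<Rightarrow> (nat \<Rightarrow> real \<times> real)
    \<Rightarrow> nat \<Rightarrow> ereal" where
  "levels b K z \<omega> 0 = z"
| "levels b K z \<omega> (Suc n) = next_level b K (\<omega> n) (levels b K z \<omega> n)"

primrec jump_times :: "(real \<Rightarrow> real) \<Rightarrow> (real \<Rightarrow> ereal measure) \<Rightarrow> ereal \<Rightarrow> (nat \<Rightarrow> real \<times> real)
    \<Rightarrow> nat \<Rightarrow> ereal" where
  "jump_times b K z \<omega> 0 = 0"
| "jump_times b K z \<omega> (Suc n) = next_time b (\<omega> n) (levels b K z \<omega> n) (jump_times b K z \<omega> n)"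

text \<open>The value \<open>-\<infinity>\<close> is \<open>lquantile K w u\<close> for \<open>u \<le> 0\<close>: the uniform noise never takes such
  values, but the step maps are defined for them.\<close>
definition valid_level :: "ereal \<Rightarrow> bool" where
  "valid_level z \<longleftrightarrow> z = -\<infinity> \<or> 0 \<le> z"

lemma levels_add: "levels b K z \<omega> (n + m) = levels b K (levels b K z \<omega> n) (\<lambda>k. \<omega> (n + k)) m"
  by (induction m) auto

lemma levels_Suc_shift:
  "levels b K z \<omega> (Suc n) = levels b K (next_level b K (\<omega> 0) z) (\<lambda>k. \<omega> (Suc k)) n"
  by (induction n) auto

lemma levels_case_nat: "levels b K z (case_nat a \<omega>) (Suc n) = levels b K (next_level b K a z) \<omega> n"
  by (simp only: levels_Suc_shift) simp

lemma levels_absorbed: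
  assumes "levels b K z \<omega> n \<in> {0, \<infinity>}" "n \<le> m"
  shows "levels b K z \<omega> m = levels b K z \<omega> n"
  using assms(2)
proof (induction m)
  case (Suc m)
  then show ?case using assms(1) by (cases "n = Suc m") (auto simp: next_level_def)
qed simp

context splitting_params
begin

lemma step_duration_bounds: "0 \<le> step_duration b a z \<and> step_duration b a z \<le> max 0 (real_of_ereal z)"
  using jump_descent_nonneg jump_descent_le_level[of "fst a" "max 0 (real_of_ereal z)"]
  by (simp add: step_duration_def)

lemma measurable_step_duration[measurable (raw)]:
  assumes "f \<in> M \<rightarrow>\<^sub>M (borel \<Otimes>\<^sub>M borel :: (real \<times> real) measure)" "g \<in> borel_measurable M"
  shows "(\<lambda>x. step_duration b (f x) (g x)) \<in> borel_measurable M"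
  unfolding step_duration_def using assms by measurable

lemma measurable_next_level[measurable (raw)]:
  assumes "f \<in> M \<rightarrow>\<^sub>M (borel \<Otimes>\<^sub>M borel :: (real \<times> real) measure)" "g \<in> borel_measurable M"
  shows "(\<lambda>x. next_level b K (f x) (g x)) \<in> borel_measurable M"
  unfolding next_level_def using assms by measurable

lemma measurable_next_time[measurable (raw)]:
  assumes "f \<in> M \<rightarrow>\<^sub>M (borel \<Otimes>\<^sub>M borel :: (real \<times> real) measure)"
    "g \<in> borel_measurable M" "h \<in> borel_measurable M"
  shows "(\<lambda>x. next_time b (f x) (g x) (h x)) \<in> borel_measurable M"
  unfolding next_time_def using assms by measurable

lemma cstep_eq:
  assumes "valid_level z"
  shows "cstep b K a (z, t) = (next_level b K a z, next_time b a z t)"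
proof (cases "z = 0 \<or> z = \<infinity>")
  case True
  then show ?thesis unfolding cstep_def next_level_def next_time_def by auto
next
  case False
  define r where "r = real_of_ereal z"
  have r0: "0 \<le> r" using assms False unfolding valid_level_def r_def by (cases z) auto
  obtain e u where a: "a = (e, u)" by (cases a)
  show ?thesis
  proof (cases "G r < e")
    case True
    then show ?thesis using False r0
      by (simp add: hazard_full cstep_def next_level_def next_time_def step_duration_def a Let_def
          r_def[symmetric])
  next
    case c: False
    then have "step_duration b a z = Inf {s\<in>{0..r}. e \<le> hazard b r s}"
      using r0 by (simp add: step_duration_def a r_def[symmetric] jump_descent_eq)
    moreover have "step_duration b a z \<le> r" using step_duration_bounds[of a z] r0 by (simp add: r_def)
    ultimately show ?thesis using False r0 c
      by (simp add: hazard_full cstep_def next_level_def next_time_def a Let_def r_def[symmetric])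
  qed
qed

lemma valid_level_next_level:
  assumes "valid_level z"
  shows "valid_level (next_level b K a z)"
proof -
  define r where "r = max 0 (real_of_ereal z)"
  have "0 \<le> r - step_duration b a z" using step_duration_bounds[of a z] by (simp add: r_def)
  then show ?thesis
    using assms lquantile_nonneg_or_minf[of "r - step_duration b a z" "snd a"]
    unfolding next_level_def r_def[symmetric] valid_level_def
    by (cases "lquantile K (r - step_duration b a z) (snd a)") auto
qed

lemma valid_level_levels: "valid_level z \<Longrightarrow> valid_level (levels b K z \<omega> n)"
  by (induction n) (auto intro: valid_level_next_level)

lemma chain_eq:
  assumes "0 \<le> x"
  shows "chain b K x \<omega> n = (levels b K (ereal x) \<omega> n, jump_times b K (ereal x) \<omega> n)"
proof (induction n)
  case (Suc n)
  have "valid_level (levels b K (ereal x) \<omega> n)"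
    by (rule valid_level_levels) (use assms in \<open>simp add: valid_level_def\<close>)
  then show ?case using Suc by (simp add: cstep_eq)
qed (simp add: zero_ereal_def)

end

section \<open>The driving noise\<close>

definition step_noise :: "(real \<times> real) measure" where
  "step_noise = density lborel (exponential_density 1) \<Otimes>\<^sub>M uniform_measure lborel {0<..<1}"

lemma noise_eq_PiM: "noise = PiM UNIV (\<lambda>_. step_noise)"
  by (simp add: noise_def step_noise_def)

lemma prob_space_step_noise: "prob_space step_noise"
  unfolding step_noise_def
  by (intro prob_space_pair prob_space_exponential_density prob_space_uniform_measure) auto

lemma sets_step_noise: "sets step_noise = sets (borel \<Otimes>\<^sub>M borel)"
  unfolding step_noise_def by (intro sets_pair_measure_cong) auto

lemma space_step_noise: "space step_noise = UNIV"
  using sets_eq_imp_space_eq[OF sets_step_noise] by (simp add: space_pair_measure)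

lemma space_noise[simp]: "space noise = UNIV"
  unfolding noise_eq_PiM space_PiM space_step_noise by auto

lemma prob_space_noise: "prob_space noise"
  unfolding noise_eq_PiM by (intro prob_space_PiM prob_space_step_noise)

lemma sigma_finite_noise: "sigma_finite_measure noise"
proof -
  interpret prob_space noise by (rule prob_space_noise)
  show ?thesis by unfold_locales
qed

lemma sequence_space_step_noise: "sequence_space step_noise"
proof -
  interpret prob_space step_noise by (rule prob_space_step_noise)
  show ?thesis by unfold_locales
qed

lemma measurable_component_noise: "(\<lambda>\<omega>. \<omega> n) \<in> noise \<rightarrow>\<^sub>M step_noise"
  unfolding noise_eq_PiM by (rule measurable_component_singleton) simp

lemma measurable_component_noise_borel[measurable]: "(\<lambda>\<omega>. \<omega> n) \<in> noise \<rightarrow>\<^sub>M borel \<Otimes>\<^sub>M borel"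
  using measurable_component_noise measurable_cong_sets[OF refl sets_step_noise] by blast

lemma measurable_shift_noise[measurable]: "(\<lambda>\<omega> k. \<omega> (n + k)) \<in> noise \<rightarrow>\<^sub>M noise"
  unfolding noise_eq_PiM
  by (rule measurable_PiM_single')
     (auto simp: space_PiM space_step_noise intro: measurable_component_singleton)

lemma measurable_case_nat_noise: "(\<lambda>(a, \<omega>). case_nat a \<omega>) \<in> step_noise \<Otimes>\<^sub>M noise \<rightarrow>\<^sub>M noise"
proof -
  have "(\<lambda>p. case_nat (fst p) (snd p)) \<in> step_noise \<Otimes>\<^sub>M noise \<rightarrow>\<^sub>M noise"
    unfolding noise_eq_PiM
  proof (rule measurable_PiM_single')
    fix i :: nat
    show "(\<lambda>p. case_nat (fst p) (snd p) i) \<in> step_noise \<Otimes>\<^sub>M (\<Pi>\<^sub>M i\<in>UNIV. step_noise) \<rightarrow>\<^sub>M step_noise"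
      by (cases i) (simp_all add: measurable_compose[OF measurable_snd measurable_component_singleton])
  qed (auto simp: space_PiM space_step_noise split: nat.split)
  then show ?thesis by (simp add: case_prod_beta')
qed

lemma measurable_case_nat_noise'[measurable (raw)]:
  assumes "f \<in> M \<rightarrow>\<^sub>M step_noise" "g \<in> M \<rightarrow>\<^sub>M noise"
  shows "(\<lambda>x. case_nat (f x) (g x)) \<in> M \<rightarrow>\<^sub>M noise"
  using measurable_compose[OF measurable_Pair[OF assms] measurable_case_nat_noise] by simp

lemma emeasure_component_noise:
  assumes "A \<in> sets step_noise"
  shows "emeasure noise {\<omega>. \<omega> n \<in> A} = emeasure step_noise A"
proof -
  interpret sequence_space step_noise by (rule sequence_space_step_noise)
  have "emeasure step_noise A = emeasure (distr noise step_noise (\<lambda>\<omega>. \<omega> n)) A"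
    unfolding noise_eq_PiM by (simp add: PiM_component)
  also have "\<dots> = emeasure noise {\<omega>. \<omega> n \<in> A}"
    using emeasure_distr[OF measurable_component_noise assms] by (simp add: vimage_def)
  finally show ?thesis ..
qed

lemma emeasure_step_noise_clock_gt:
  assumes h: "0 \<le> h"
  shows "emeasure step_noise {a. h < fst a} = ennreal (exp (- h))"
proof -
  let ?E = "density lborel (exponential_density (1::real))"
  let ?U = "uniform_measure lborel {0<..<(1::real)}"
  interpret E: prob_space ?E by (rule prob_space_exponential_density) simp
  interpret U: prob_space ?U by (rule prob_space_uniform_measure) auto
  have "distributed ?E lborel (\<lambda>x. x) (exponential_density 1)"
    unfolding distributed_def by (auto intro: distr_id2)
  from E.exponential_distributedD_gt[OF this h] have "emeasure ?E {h<..} = ennreal (exp (- h))"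
    by (simp add: E.emeasure_eq_measure greaterThan_def)
  moreover have "{a::real \<times> real. h < fst a} = {h<..} \<times> UNIV" by auto
  ultimately show ?thesis
    unfolding step_noise_def using U.emeasure_pair_measure_Times[of "{h<..}" ?E UNIV] U.emeasure_space_1
    by simp
qed

lemma distr_case_nat_noise: "distr (step_noise \<Otimes>\<^sub>M noise) noise (\<lambda>(a, \<omega>). case_nat a \<omega>) = noise"
proof -
  interpret sequence_space step_noise by (rule sequence_space_step_noise)
  show ?thesis unfolding noise_eq_PiM by (rule PiM_iter)
qed

lemma nn_integral_noise_case_nat:
  assumes g: "g \<in> borel_measurable noise"
  shows "(\<integral>\<^sup>+\<omega>. g \<omega> \<partial>noise) = (\<integral>\<^sup>+a. \<integral>\<^sup>+\<omega>. g (case_nat a \<omega>) \<partial>noise \<partial>step_noise)"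
proof -
  have "(\<integral>\<^sup>+\<omega>. g \<omega> \<partial>noise) = (\<integral>\<^sup>+\<omega>. g \<omega> \<partial>distr (step_noise \<Otimes>\<^sub>M noise) noise (\<lambda>(a, \<omega>). case_nat a \<omega>))"
    by (simp only: distr_case_nat_noise)
  also have "\<dots> = (\<integral>\<^sup>+p. g (case_nat (fst p) (snd p)) \<partial>(step_noise \<Otimes>\<^sub>M noise))"
    using g by (subst nn_integral_distr[OF measurable_case_nat_noise]) (simp_all add: case_prod_beta')
  also have "\<dots> = (\<integral>\<^sup>+a. \<integral>\<^sup>+\<omega>. g (case_nat a \<omega>) \<partial>noise \<partial>step_noise)"
    using g by (subst sigma_finite_measure.nn_integral_fst[OF sigma_finite_noise, symmetric]) simp_all
  finally show ?thesis .
qed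

lemma emeasure_noise_case_nat:
  assumes X: "X \<in> sets noise"
  shows "emeasure noise X = (\<integral>\<^sup>+a. emeasure noise {\<omega>. case_nat a \<omega> \<in> X} \<partial>step_noise)"
proof -
  have "emeasure noise X = (\<integral>\<^sup>+\<omega>. indicator X \<omega> \<partial>noise)" using X by simp
  also have "\<dots> = (\<integral>\<^sup>+a. \<integral>\<^sup>+\<omega>. indicator X (case_nat a \<omega>) \<partial>noise \<partial>step_noise)"
    using X by (intro nn_integral_noise_case_nat) simp
  also have "\<dots> = (\<integral>\<^sup>+a. emeasure noise {\<omega>. case_nat a \<omega> \<in> X} \<partial>step_noise)"
  proof (rule nn_integral_cong)
    fix a assume "a \<in> space step_noise"
    have "(\<lambda>\<omega>. case_nat a \<omega>) \<in> noise \<rightarrow>\<^sub>M noise"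
      using \<open>a \<in> space step_noise\<close> by measurable
    from measurable_sets[OF this X] have "{\<omega>. case_nat a \<omega> \<in> X} \<in> sets noise"
      by (simp add: vimage_def)
    moreover have "(\<lambda>\<omega>. indicator X (case_nat a \<omega>) :: ennreal) = indicator {\<omega>. case_nat a \<omega> \<in> X}"
      by (auto simp: indicator_def)
    ultimately show "(\<integral>\<^sup>+\<omega>. indicator X (case_nat a \<omega>) \<partial>noise) = emeasure noise {\<omega>. case_nat a \<omega> \<in> X}"
      by (simp only: nn_integral_indicator)
  qed
  finally show ?thesis .
qed

lemma measurable_emeasure_noise_case_nat:
  assumes X: "X \<in> sets noise"
  shows "(\<lambda>a. emeasure noise {\<omega>. case_nat a \<omega> \<in> X}) \<in> borel_measurable step_noise"
proof -
  have "Pair a -` ((\<lambda>(a, \<omega>). case_nat a \<omega>) -` X \<inter> space (step_noise \<Otimes>\<^sub>M noise)) =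
      {\<omega>. case_nat a \<omega> \<in> X}" for a
    by (auto simp: space_pair_measure space_step_noise)
  with sigma_finite_measure.measurable_emeasure_Pair[OF sigma_finite_noise
      measurable_sets[OF measurable_case_nat_noise X]]
  show ?thesis by simp
qed

context splitting_params
begin

lemma measurable_levels_pair: "(\<lambda>p. levels b K (fst p) (snd p) n) \<in> borel_measurable (borel \<Otimes>\<^sub>M noise)"
  by (induction n) simp_all

lemma measurable_levels[measurable (raw)]:
  assumes "f \<in> borel_measurable M" "g \<in> M \<rightarrow>\<^sub>M noise"
  shows "(\<lambda>x. levels b K (f x) (g x) n) \<in> borel_measurable M"
  using measurable_compose[OF measurable_Pair[OF assms] measurable_levels_pair] by simp

lemma measurable_jump_times[measurable]: "(\<lambda>\<omega>. jump_times b K z \<omega> n) \<in> borel_measurable noise"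
  by (induction n) simp_all

text \<open>Markov property at time n: the shifted noise is independent of the level reached.\<close>
lemma emeasure_levels_shift:
  assumes P: "P \<in> sets (borel \<Otimes>\<^sub>M noise)"
  shows "emeasure noise {\<omega>. (levels b K z \<omega> n, (\<lambda>k. \<omega> (n + k))) \<in> P} =
    (\<integral>\<^sup>+\<omega>. emeasure noise (Pair (levels b K z \<omega> n) -` P) \<partial>noise)"
proof (induction n arbitrary: z)
  case 0
  interpret prob_space noise by (rule prob_space_noise)
  show ?case using emeasure_space_1 by (simp add: vimage_def)
next
  case (Suc n)
  define f where "f z' = emeasure noise (Pair z' -` P)" for z'
  have [measurable]: "f \<in> borel_measurable borel"
    unfolding f_def using sigma_finite_measure.measurable_emeasure_Pair[OF sigma_finite_noise P] .
  define X where "X = {\<omega>. (levels b K z \<omega> (Suc n), (\<lambda>k. \<omega> (Suc n + k))) \<in> P}"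
  have "X = (\<lambda>\<omega>. (levels b K z \<omega> (Suc n), (\<lambda>k. \<omega> (Suc n + k)))) -` P \<inter> space noise"
    by (auto simp: X_def)
  also have "\<dots> \<in> sets noise" using P by measurable
  finally have "emeasure noise X = (\<integral>\<^sup>+a. emeasure noise {\<omega>. case_nat a \<omega> \<in> X} \<partial>step_noise)"
    by (rule emeasure_noise_case_nat)
  also have "\<dots> =
      (\<integral>\<^sup>+a. emeasure noise {\<omega>. (levels b K (next_level b K a z) \<omega> n, (\<lambda>k. \<omega> (n + k))) \<in> P} \<partial>step_noise)"
    by (simp add: X_def levels_case_nat del: levels.simps)
  also have "\<dots> = (\<integral>\<^sup>+a. \<integral>\<^sup>+\<omega>. f (levels b K z (case_nat a \<omega>) (Suc n)) \<partial>noise \<partial>step_noise)"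
    by (simp add: Suc.IH f_def levels_case_nat del: levels.simps)
  also have "\<dots> = (\<integral>\<^sup>+\<omega>. f (levels b K z \<omega> (Suc n)) \<partial>noise)"
    by (rule nn_integral_noise_case_nat[symmetric]) measurable
  finally show ?case by (simp add: X_def f_def)
qed

end

lemma
  assumes "Measurable.pred (borel \<Otimes>\<^sub>M (borel \<Otimes>\<^sub>M borel)) (\<lambda>p. Q (fst p) (snd p))"
  shows sets_step_event_slice: "{a. Q z a} \<in> sets step_noise"
    and sets_step_event: "{p \<in> space (borel \<Otimes>\<^sub>M noise). Q (fst p) (snd p 0)} \<in> sets (borel \<Otimes>\<^sub>M noise)"
proof -
  have "(\<lambda>a. (z, a)) \<in> borel \<Otimes>\<^sub>M borel \<rightarrow>\<^sub>M borel \<Otimes>\<^sub>M (borel \<Otimes>\<^sub>M borel)" by simp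
  from measurable_compose[OF this assms] have "Measurable.pred (borel \<Otimes>\<^sub>M borel) (Q z)" by simp
  then show "{a. Q z a} \<in> sets step_noise"
    unfolding sets_step_noise by (simp add: pred_def space_pair_measure)
  have "(\<lambda>p. (fst p, snd p 0)) \<in> borel \<Otimes>\<^sub>M noise \<rightarrow>\<^sub>M borel \<Otimes>\<^sub>M (borel \<Otimes>\<^sub>M borel)" by measurable
  from measurable_compose[OF this assms]
  show "{p \<in> space (borel \<Otimes>\<^sub>M noise). Q (fst p) (snd p 0)} \<in> sets (borel \<Otimes>\<^sub>M noise)"
    by (simp add: pred_def)
qed

lemma emeasure_step_slice:
  assumes "Measurable.pred (borel \<Otimes>\<^sub>M (borel \<Otimes>\<^sub>M borel)) (\<lambda>p. Q (fst p) (snd p))"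
  shows "emeasure noise (Pair z -` {p \<in> space (borel \<Otimes>\<^sub>M noise). Q (fst p) (snd p 0)}) =
    emeasure step_noise {a. Q z a}"
proof -
  have "Pair z -` {p \<in> space (borel \<Otimes>\<^sub>M noise). Q (fst p) (snd p 0)} = {\<omega>. \<omega> 0 \<in> {a. Q z a}}"
    by (auto simp: space_pair_measure)
  then show ?thesis using emeasure_component_noise[OF sets_step_event_slice[OF assms]] by simp
qed

lemma measurable_emeasure_step_slice:
  assumes "Measurable.pred (borel \<Otimes>\<^sub>M (borel \<Otimes>\<^sub>M borel)) (\<lambda>p. Q (fst p) (snd p))"
  shows "(\<lambda>z. emeasure step_noise {a. Q z a}) \<in> borel_measurable borel"
  using sigma_finite_measure.measurable_emeasure_Pair[OF sigma_finite_noise sets_step_event[OF assms]]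
  by (simp only: emeasure_step_slice[OF assms])

context splitting_params
begin

lemma emeasure_step_event:
  assumes Q: "Measurable.pred (borel \<Otimes>\<^sub>M (borel \<Otimes>\<^sub>M borel)) (\<lambda>p. Q (fst p) (snd p))"
  shows "emeasure noise {\<omega>. Q (levels b K z \<omega> n) (\<omega> n)} =
    (\<integral>\<^sup>+\<omega>. emeasure step_noise {a. Q (levels b K z \<omega> n) a} \<partial>noise)"
proof -
  let ?P = "{p \<in> space (borel \<Otimes>\<^sub>M noise). Q (fst p) (snd p 0)}"
  have "{\<omega>. Q (levels b K z \<omega> n) (\<omega> n)} = {\<omega>. (levels b K z \<omega> n, (\<lambda>k. \<omega> (n + k))) \<in> ?P}"
    by (auto simp: space_pair_measure)
  also have "emeasure noise \<dots> = (\<integral>\<^sup>+\<omega>. emeasure noise (Pair (levels b K z \<omega> n) -` ?P) \<partial>noise)"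
    by (rule emeasure_levels_shift[OF sets_step_event[OF Q]])
  finally show ?thesis by (simp only: emeasure_step_slice[OF Q])
qed

end

definition step_passes :: "(real \<Rightarrow> real) \<Rightarrow> real \<Rightarrow> ereal \<Rightarrow> real \<times> real \<Rightarrow> bool" where
  "step_passes b y z a \<longleftrightarrow>
     ereal y \<le> z \<and> z < \<infinity> \<and> cum_rate b (real_of_ereal z) - cum_rate b y < fst a"

definition step_to_zero :: "(real \<Rightarrow> real) \<Rightarrow> ereal \<Rightarrow> real \<times> real \<Rightarrow> bool" where
  "step_to_zero b z a \<longleftrightarrow> 0 < z \<and> z < \<infinity> \<and> cum_rate b (real_of_ereal z) < fst a"

definition step_below :: "(real \<Rightarrow> real) \<Rightarrow> real \<Rightarrow> ereal \<Rightarrow> real \<times> real \<Rightarrow> bool" where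
  "step_below b M z a \<longleftrightarrow>
     0 < z \<and> z < \<infinity> \<and> (real_of_ereal z \<le> M \<or> cum_rate b (real_of_ereal z) - cum_rate b M < fst a)"

context splitting_params
begin

lemma pred_step_passes: "Measurable.pred (borel \<Otimes>\<^sub>M (borel \<Otimes>\<^sub>M borel)) (\<lambda>p. step_passes b y (fst p) (snd p))"
  unfolding step_passes_def by measurable

lemma pred_step_to_zero: "Measurable.pred (borel \<Otimes>\<^sub>M (borel \<Otimes>\<^sub>M borel)) (\<lambda>p. step_to_zero b (fst p) (snd p))"
  unfolding step_to_zero_def by measurable

lemma pred_step_below: "Measurable.pred (borel \<Otimes>\<^sub>M (borel \<Otimes>\<^sub>M borel)) (\<lambda>p. step_below b M (fst p) (snd p))"
  unfolding step_below_def by measurable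

lemma next_level_step_to_zero: "step_to_zero b z a \<Longrightarrow> next_level b K a z = 0"
  unfolding step_to_zero_def next_level_def by (cases z) auto

lemma emeasure_step_below_le:
  assumes M: "0 \<le> M"
  shows "emeasure step_noise {a. step_below b M z a} * ennreal (exp (- G M)) \<le>
    emeasure step_noise {a. step_to_zero b z a}"
proof (cases "0 < z \<and> z < \<infinity>")
  case False
  then have "{a. step_below b M z a} = {}" unfolding step_below_def by auto
  then show ?thesis by (simp only: emeasure_empty) simp
next
  case True
  define r where "r = real_of_ereal z"
  have "{a. step_to_zero b z a} = {a. G r < fst a}"
    using True unfolding step_to_zero_def r_def by auto
  then have zero: "emeasure step_noise {a. step_to_zero b z a} = ennreal (exp (- G r))"
    using emeasure_step_noise_clock_gt[OF cum_rate_nonneg] by simp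
  show ?thesis
  proof (cases "r \<le> M")
    case True
    interpret prob_space step_noise by (rule prob_space_step_noise)
    have "{a. step_below b M z a} = space step_noise"
      using \<open>0 < z \<and> z < \<infinity>\<close> True unfolding step_below_def r_def space_step_noise by auto
    moreover have "exp (- G M) \<le> exp (- G r)" using cum_rate_mono[OF True] by simp
    ultimately show ?thesis using zero by (simp add: emeasure_space_1 ennreal_leI)
  next
    case False
    have "{a. step_below b M z a} = {a. G r - G M < fst a}"
      using True False unfolding step_below_def r_def by auto
    moreover have "0 \<le> G r - G M" using cum_rate_mono[of M r] False by simp
    ultimately have "emeasure step_noise {a. step_below b M z a} = ennreal (exp (- (G r - G M)))"
      using emeasure_step_noise_clock_gt by simp
    moreover have "exp (- (G r - G M)) * exp (- G M) = exp (- G r)" by (simp add: exp_add[symmetric])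
    ultimately show ?thesis using zero by (simp add: ennreal_mult''[symmetric])
  qed
qed

lemma disjoint_family_step_to_zero:
  "disjoint_family (\<lambda>n. {\<omega>. step_to_zero b (levels b K z \<omega> n) (\<omega> n)})"
proof -
  have absurd: False if "m < n" "step_to_zero b (levels b K z \<omega> m) (\<omega> m)"
    "step_to_zero b (levels b K z \<omega> n) (\<omega> n)" for m n \<omega>
  proof -
    have "levels b K z \<omega> (Suc m) = 0" using that(2) by (simp add: next_level_step_to_zero)
    then have "levels b K z \<omega> n = 0" using levels_absorbed[of b K z \<omega> "Suc m" n] that(1) by simp
    then show False using that(3) unfolding step_to_zero_def by simp
  qed
  show ?thesis
    unfolding disjoint_family_on_def
  proof (intro ballI impI)
    fix m n :: nat assume "m \<noteq> n"
    then show "{\<omega>. step_to_zero b (levels b K z \<omega> m) (\<omega> m)} \<inter>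
        {\<omega>. step_to_zero b (levels b K z \<omega> n) (\<omega> n)} = {}"
      using absurd[of m n] absurd[of n m] by (cases "m < n") auto
  qed
qed

text \<open>Borel--Cantelli: the steps to 0 are disjoint events, so the steps passing below M,
  which are at most \<open>exp (G M)\<close> times as likely, have summable probabilities.\<close>
lemma AE_eventually_not_step_below:
  assumes M: "0 \<le> M"
  shows "AE \<omega> in noise. eventually (\<lambda>n. \<not> step_below b M (levels b K z \<omega> n) (\<omega> n)) sequentially"
proof -
  interpret prob_space noise by (rule prob_space_noise)
  define A where "A n = {\<omega>. step_below b M (levels b K z \<omega> n) (\<omega> n)}" for n
  define C where "C n = {\<omega>. step_to_zero b (levels b K z \<omega> n) (\<omega> n)}" for n
  define q where "q = exp (- G M)"
  have "A n = {\<omega> \<in> space noise. step_below b M (levels b K z \<omega> n) (\<omega> n)}" for n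
    by (simp add: A_def)
  also have "\<dots> n \<in> sets noise" for n unfolding step_below_def by measurable
  finally have A_sets: "A n \<in> sets noise" for n .
  have "C n = {\<omega> \<in> space noise. step_to_zero b (levels b K z \<omega> n) (\<omega> n)}" for n
    by (simp add: C_def)
  also have "\<dots> n \<in> sets noise" for n unfolding step_to_zero_def by measurable
  finally have C_sets: "C n \<in> sets noise" for n .
  have "emeasure noise (A n) * ennreal q \<le> emeasure noise (C n)" for n
  proof -
    have "emeasure noise (A n) * ennreal q =
        (\<integral>\<^sup>+\<omega>. emeasure step_noise {a. step_below b M (levels b K z \<omega> n) a} * ennreal q \<partial>noise)"
      unfolding A_def emeasure_step_event[OF pred_step_below]
      using measurable_emeasure_step_slice[OF pred_step_below] by (intro nn_integral_multc[symmetric]) simp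
    also have "\<dots> \<le> (\<integral>\<^sup>+\<omega>. emeasure step_noise {a. step_to_zero b (levels b K z \<omega> n) a} \<partial>noise)"
      by (rule nn_integral_mono) (use emeasure_step_below_le[OF M] in \<open>simp add: q_def\<close>)
    also have "\<dots> = emeasure noise (C n)"
      unfolding C_def by (rule emeasure_step_event[OF pred_step_to_zero, symmetric])
    finally show ?thesis .
  qed
  then have "measure noise (A n) * q \<le> measure noise (C n)" for n
    by (simp add: q_def emeasure_eq_measure ennreal_mult''[symmetric] ennreal_le_iff)
  then have AC: "measure noise (A n) \<le> measure noise (C n) / q" for n
    by (simp add: q_def field_simps)
  have "(\<lambda>n. measure noise (C n)) sums measure noise (\<Union>n. C n)"
    using C_sets disjoint_family_step_to_zero by (intro finite_measure_UNION) (auto simp: C_def)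
  then have "summable (\<lambda>n. measure noise (C n) / q)" by (intro summable_divide sums_summable)
  then have "summable (\<lambda>n. measure noise (A n))"
    by (rule summable_comparison_test[rotated]) (use AC in auto)
  from borel_cantelli_AE1[OF A_sets _ this] show ?thesis by (simp add: A_def emeasure_eq_measure)
qed

end

section \<open>Memorylessness and restarting at a level\<close>

lemma nn_integral_exponential_shift:
  fixes \<psi> :: "real \<Rightarrow> ennreal"
  assumes h: "0 \<le> h" and \<psi>[measurable]: "\<psi> \<in> borel_measurable borel"
  shows "(\<integral>\<^sup>+e. indicator {h<..} e * \<psi> (e - h) \<partial>density lborel (exponential_density 1)) =
    ennreal (exp (- h)) * (\<integral>\<^sup>+e. \<psi> e \<partial>density lborel (exponential_density 1))"
proof -
  have "(\<integral>\<^sup>+e. indicator {h<..} e * \<psi> (e - h) \<partial>density lborel (exponential_density 1)) =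
      (\<integral>\<^sup>+e. ennreal (exponential_density 1 e) * (indicator {h<..} e * \<psi> (e - h)) \<partial>lborel)"
    by (rule nn_integral_density) measurable
  also have "\<dots> = (\<integral>\<^sup>+x. ennreal (exponential_density 1 (h + x)) * (indicator {h<..} (h + x) * \<psi> x) \<partial>lborel)"
    by (subst nn_integral_real_affine[where c=1 and t=h]) simp_all
  also have "\<dots> = (\<integral>\<^sup>+x. ennreal (exp (- h)) * (ennreal (exponential_density 1 x) * \<psi> x) \<partial>lborel)"
  proof (rule nn_integral_cong_AE)
    show "AE x in lborel. ennreal (exponential_density 1 (h + x)) * (indicator {h<..} (h + x) * \<psi> x) =
        ennreal (exp (- h)) * (ennreal (exponential_density 1 x) * \<psi> x)"
      using AE_lborel_singleton[of 0]
    proof (rule AE_mp, intro AE_I2 impI)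
      fix x :: real assume "x \<noteq> 0"
      show "ennreal (exponential_density 1 (h + x)) * (indicator {h<..} (h + x) * \<psi> x) =
          ennreal (exp (- h)) * (ennreal (exponential_density 1 x) * \<psi> x)"
      proof (cases "0 < x")
        case True
        have "exp (- (h + x)) = exp (- h) * exp (- x)" by (simp add: exp_add[symmetric])
        then show ?thesis using True h by (simp add: exponential_density_def ennreal_mult mult.assoc)
      qed (use \<open>x \<noteq> 0\<close> in \<open>simp add: exponential_density_def indicator_def\<close>)
    qed
  qed
  also have "\<dots> = ennreal (exp (- h)) * (\<integral>\<^sup>+e. ennreal (exponential_density 1 e) * \<psi> e \<partial>lborel)"
    by (rule nn_integral_cmult) measurable
  also have "(\<integral>\<^sup>+e. ennreal (exponential_density 1 e) * \<psi> e \<partial>lborel) =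
      (\<integral>\<^sup>+e. \<psi> e \<partial>density lborel (exponential_density 1))"
    by (rule nn_integral_density[symmetric]) measurable
  finally show ?thesis .
qed

lemma nn_integral_step_noise_shift:
  assumes h: "0 \<le> h" and g: "g \<in> borel_measurable step_noise"
  shows "(\<integral>\<^sup>+a. indicator {a. h < fst a} a * g (fst a - h, snd a) \<partial>step_noise) =
    ennreal (exp (- h)) * (\<integral>\<^sup>+a. g a \<partial>step_noise)"
proof -
  let ?E = "density lborel (exponential_density (1::real))"
  let ?U = "uniform_measure lborel {0<..<(1::real)}"
  interpret U: prob_space ?U by (rule prob_space_uniform_measure) auto
  have g': "g \<in> borel_measurable (?E \<Otimes>\<^sub>M ?U)" using g unfolding step_noise_def .
  have "g \<in> borel_measurable (borel \<Otimes>\<^sub>M borel)"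
    using g measurable_cong_sets[OF sets_step_noise refl] by blast
  then have "(\<lambda>a. indicator {a. h < fst a} a * g (fst a - h, snd a)) \<in> borel_measurable (borel \<Otimes>\<^sub>M borel)"
    by measurable
  then have g_shift: "(\<lambda>a. indicator {a. h < fst a} a * g (fst a - h, snd a)) \<in> borel_measurable (?E \<Otimes>\<^sub>M ?U)"
    using measurable_cong_sets[OF sets_step_noise[unfolded step_noise_def] refl] by blast
  define \<psi> where "\<psi> e = (\<integral>\<^sup>+u. g (e, u) \<partial>?U)" for e
  have "\<psi> \<in> borel_measurable ?E"
    unfolding \<psi>_def by (rule U.borel_measurable_nn_integral_fst[OF g'])
  then have \<psi>_meas: "\<psi> \<in> borel_measurable borel"
    using measurable_cong_sets[of ?E borel] by simp
  have "(\<integral>\<^sup>+a. indicator {a. h < fst a} a * g (fst a - h, snd a) \<partial>step_noise) =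
      (\<integral>\<^sup>+e. \<integral>\<^sup>+u. indicator {a. h < fst a} (e, u) * g (e - h, u) \<partial>?U \<partial>?E)"
    unfolding step_noise_def using U.nn_integral_fst[OF g_shift] by (simp only: fst_conv snd_conv)
  also have "\<dots> = (\<integral>\<^sup>+e. indicator {h<..} e * \<psi> (e - h) \<partial>?E)"
  proof (rule nn_integral_cong)
    fix e
    have "(\<integral>\<^sup>+u. indicator {a. h < fst a} (e, u) * g (e - h, u) \<partial>?U) =
        (\<integral>\<^sup>+u. indicator {h<..} e * g (e - h, u) \<partial>?U)"
      by (rule nn_integral_cong) (simp add: indicator_def)
    also have "\<dots> = indicator {h<..} e * \<psi> (e - h)"
      unfolding \<psi>_def by (rule nn_integral_cmult, rule measurable_Pair2[OF g']) simp
    finally show "(\<integral>\<^sup>+u. indicator {a. h < fst a} (e, u) * g (e - h, u) \<partial>?U) =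
        indicator {h<..} e * \<psi> (e - h)" .
  qed
  also have "\<dots> = ennreal (exp (- h)) * (\<integral>\<^sup>+e. \<psi> e \<partial>?E)"
    by (rule nn_integral_exponential_shift[OF h \<psi>_meas])
  also have "(\<integral>\<^sup>+e. \<psi> e \<partial>?E) = (\<integral>\<^sup>+a. g a \<partial>step_noise)"
    unfolding step_noise_def \<psi>_def using U.nn_integral_fst[OF g'] by (simp only: fst_conv snd_conv)
  finally show ?thesis .
qed

text \<open>Conditionally on the first clock exceeding h, lowering it by h leaves the law of the noise
  unchanged.\<close>
lemma emeasure_noise_clock_shift:
  assumes h: "0 \<le> h" and N: "N \<in> sets noise"
  shows "emeasure noise {\<omega>. h < fst (\<omega> 0) \<and> case_nat (fst (\<omega> 0) - h, snd (\<omega> 0)) (\<lambda>k. \<omega> (Suc k)) \<in> N} =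
    ennreal (exp (- h)) * emeasure noise N"
proof -
  define X where "X = {\<omega>. h < fst (\<omega> 0) \<and> case_nat (fst (\<omega> 0) - h, snd (\<omega> 0)) (\<lambda>k. \<omega> (Suc k)) \<in> N}"
  have "(\<lambda>\<omega>. (fst (\<omega> 0) - h, snd (\<omega> 0))) \<in> noise \<rightarrow>\<^sub>M borel \<Otimes>\<^sub>M borel" by measurable
  then have [measurable]: "(\<lambda>\<omega>. (fst (\<omega> 0) - h, snd (\<omega> 0))) \<in> noise \<rightarrow>\<^sub>M step_noise"
    using measurable_cong_sets[OF refl sets_step_noise] by blast
  have [measurable]: "(\<lambda>\<omega> k. \<omega> (Suc k)) \<in> noise \<rightarrow>\<^sub>M noise"
    using measurable_shift_noise[of 1] by simp
  have "X = {\<omega> \<in> space noise. h < fst (\<omega> 0)} \<inter>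
      ((\<lambda>\<omega>. case_nat (fst (\<omega> 0) - h, snd (\<omega> 0)) (\<lambda>k. \<omega> (Suc k))) -` N \<inter> space noise)"
    unfolding X_def by auto
  also have "\<dots> \<in> sets noise" using N by measurable
  finally have "emeasure noise X = (\<integral>\<^sup>+a. emeasure noise {\<omega>. case_nat a \<omega> \<in> X} \<partial>step_noise)"
    by (rule emeasure_noise_case_nat)
  also have "\<dots> = (\<integral>\<^sup>+a. indicator {a. h < fst a} a *
      emeasure noise {\<omega>. case_nat (fst a - h, snd a) \<omega> \<in> N} \<partial>step_noise)"
    by (rule nn_integral_cong) (simp add: X_def indicator_def)
  also have "\<dots> = ennreal (exp (- h)) * (\<integral>\<^sup>+a. emeasure noise {\<omega>. case_nat a \<omega> \<in> N} \<partial>step_noise)"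
    using measurable_emeasure_noise_case_nat[OF N]
    by (rule nn_integral_step_noise_shift[OF h, where g="\<lambda>a. emeasure noise {\<omega>. case_nat a \<omega> \<in> N}"])
  also have "(\<integral>\<^sup>+a. emeasure noise {\<omega>. case_nat a \<omega> \<in> N} \<partial>step_noise) = emeasure noise N"
    by (rule emeasure_noise_case_nat[OF N, symmetric])
  finally show ?thesis unfolding X_def .
qed

definition survival :: "(real \<Rightarrow> real) \<Rightarrow> (real \<Rightarrow> ereal measure) \<Rightarrow> ereal \<Rightarrow> (nat \<Rightarrow> real \<times> real) set" where
  "survival b K z = {\<omega>. \<forall>k. levels b K z \<omega> k \<noteq> 0}"

context splitting_params
begin

lemma jump_descent_shift:
  assumes y: "0 < y" "y \<le> r" and h: "h = G r - G y" "h < e" and e: "e \<le> G r"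
  shows "jump_descent b e r = (r - y) + jump_descent b (e - h) y"
proof -
  define d where "d = r - y"
  define A where "A = {s\<in>{0..r}. e \<le> hazard b r s}"
  define B where "B = {s\<in>{0..y}. e - h \<le> hazard b y s}"
  have A_iff: "s \<in> A \<longleftrightarrow> 0 \<le> s \<and> s \<le> r \<and> e \<le> G r - G (r - s)" for s
    unfolding A_def using hazard_eq_cum_rate[of s r] by auto
  have B_iff: "s \<in> B \<longleftrightarrow> 0 \<le> s \<and> s \<le> y \<and> e - h \<le> G y - G (y - s)" for s
    unfolding B_def using hazard_eq_cum_rate[of s y] by auto
  have "e - h \<le> G y" using e h by simp
  then have A: "A \<noteq> {}" "bdd_below A" and B: "B \<noteq> {}" "bdd_below B"
    using level_mem_jump_descent_set[of r e] jump_descent_set_bdd[of r e]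
      level_mem_jump_descent_set[of y "e - h"] jump_descent_set_bdd[of y "e - h"] y e
    unfolding A_def B_def by auto
  have A_B: "s - d \<in> B" if "s \<in> A" for s
  proof -
    from that have s: "0 \<le> s" "s \<le> r" "e \<le> G r - G (r - s)" by (auto simp: A_iff)
    then have "G (r - s) < G y" using h by simp
    then have "r - s < y" using cum_rate_mono[of y "r - s"] by linarith
    then show ?thesis using s h unfolding B_iff d_def by (auto simp: algebra_simps)
  qed
  have B_A: "s + d \<in> A" if "s \<in> B" for s
  proof -
    from that have "0 \<le> s" "s \<le> y" "e - h \<le> G y - G (y - s)" by (auto simp: B_iff)
    moreover have "r - (s + d) = y - s" unfolding d_def by simp
    ultimately show ?thesis using h y unfolding A_iff d_def by auto
  qed
  have "Inf A - d \<le> Inf B"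
  proof (rule cInf_greatest[OF B(1)])
    show "Inf A - d \<le> s" if "s \<in> B" for s using cInf_lower[OF B_A[OF that] A(2)] by simp
  qed
  moreover have "d + Inf B \<le> Inf A"
  proof (rule cInf_greatest[OF A(1)])
    show "d + Inf B \<le> s" if "s \<in> A" for s using cInf_lower[OF A_B[OF that] B(2)] by simp
  qed
  ultimately show ?thesis
    using y e \<open>e - h \<le> G y\<close> by (simp add: jump_descent_eq A_def B_def d_def)
qed

text \<open>A step from level \<open>z \<ge> y\<close> whose clock passes level y behaves, from there on, like a step
  from y with the clock lowered by the integrated rate between y and z.\<close>
lemma next_level_restart:
  assumes y: "0 < y" and z: "ereal y \<le> z" "z < \<infinity>" and e: "G (real_of_ereal z) - G y < e"
  shows "next_level b K (e, u) z = next_level b K (e - (G (real_of_ereal z) - G y), u) (ereal y)"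
proof -
  obtain r where zr: "z = ereal r" using z by (cases z) auto
  have r: "y \<le> r" using z zr by simp
  define h where "h = G r - G y"
  have nz: "z \<noteq> 0" "z \<noteq> \<infinity>" "ereal y \<noteq> 0" "ereal y \<noteq> \<infinity>" using zr r y by auto
  have mr: "max 0 r = r" "max 0 y = y" using r y by auto
  show ?thesis
  proof (cases "G r < e")
    case True
    then have "G y < e - h" unfolding h_def by simp
    then show ?thesis using True nz unfolding next_level_def zr h_def by (simp add: mr)
  next
    case False
    then have "\<not> G y < e - h" unfolding h_def by simp
    moreover have "jump_descent b e r = (r - y) + jump_descent b (e - h) y"
      using False e zr y r by (intro jump_descent_shift) (auto simp: h_def)
    ultimately show ?thesis using False nz unfolding next_level_def step_duration_def zr h_def[symmetric]
      by (simp add: mr h_def)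
  qed
qed

definition restart_event :: "real \<Rightarrow> (ereal \<times> (nat \<Rightarrow> real \<times> real)) set" where
  "restart_event y = {p \<in> space (borel \<Otimes>\<^sub>M noise). step_passes b y (fst p) (snd p 0) \<and>
     case_nat (fst (snd p 0) - (G (real_of_ereal (fst p)) - G y), snd (snd p 0)) (\<lambda>k. snd p (Suc k))
       \<in> survival b K (ereal y)}"

lemma sets_survival: "survival b K z \<in> sets noise"
proof -
  have "survival b K z = {\<omega> \<in> space noise. \<forall>k. levels b K z \<omega> k \<noteq> 0}" unfolding survival_def by simp
  also have "\<dots> \<in> sets noise" by measurable
  finally show ?thesis .
qed

lemma sets_restart_event: "restart_event y \<in> sets (borel \<Otimes>\<^sub>M noise)"
proof -
  define restart where "restart p = case_nat (fst (snd p 0) - (G (real_of_ereal (fst p)) - G y), snd (snd p 0))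
    (\<lambda>k. snd p (Suc k))" for p :: "ereal \<times> (nat \<Rightarrow> real \<times> real)"
  have "(\<lambda>p. (fst (snd p 0) - (G (real_of_ereal (fst p)) - G y), snd (snd p 0)))
      \<in> borel \<Otimes>\<^sub>M noise \<rightarrow>\<^sub>M borel \<Otimes>\<^sub>M borel"
    by measurable
  then have "(\<lambda>p. (fst (snd p 0) - (G (real_of_ereal (fst p)) - G y), snd (snd p 0)))
      \<in> borel \<Otimes>\<^sub>M noise \<rightarrow>\<^sub>M step_noise"
    using measurable_cong_sets[OF refl sets_step_noise] by blast
  moreover have "(\<lambda>p k. snd p (Suc k)) \<in> borel \<Otimes>\<^sub>M noise \<rightarrow>\<^sub>M noise"
    using measurable_compose[OF measurable_snd measurable_shift_noise[of 1]] by simp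
  ultimately have "restart \<in> borel \<Otimes>\<^sub>M noise \<rightarrow>\<^sub>M noise"
    unfolding restart_def by (rule measurable_case_nat_noise')
  from measurable_sets[OF this sets_survival]
  have "restart -` survival b K (ereal y) \<inter> space (borel \<Otimes>\<^sub>M noise) \<in> sets (borel \<Otimes>\<^sub>M noise)" .
  moreover have "restart_event y = {p \<in> space (borel \<Otimes>\<^sub>M noise). step_passes b y (fst p) (snd p 0)} \<inter>
      (restart -` survival b K (ereal y) \<inter> space (borel \<Otimes>\<^sub>M noise))"
    unfolding restart_event_def restart_def by blast
  ultimately show ?thesis using sets_step_event[OF pred_step_passes] by simp
qed

lemma emeasure_restart_event_slice:
  assumes y: "0 < y"
  shows "emeasure noise (Pair z -` restart_event y) =
    emeasure step_noise {a. step_passes b y z a} * emeasure noise (survival b K (ereal y))"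
proof (cases "ereal y \<le> z \<and> z < \<infinity>")
  case False
  then have "Pair z -` restart_event y = {}" "{a. step_passes b y z a} = {}"
    unfolding restart_event_def step_passes_def by auto
  then show ?thesis by (simp only: emeasure_empty) simp
next
  case True
  define h where "h = G (real_of_ereal z) - G y"
  have h0: "0 \<le> h" unfolding h_def using True cum_rate_mono[of y "real_of_ereal z"] by (cases z) auto
  have "Pair z -` restart_event y =
      {\<omega>. h < fst (\<omega> 0) \<and> case_nat (fst (\<omega> 0) - h, snd (\<omega> 0)) (\<lambda>k. \<omega> (Suc k)) \<in> survival b K (ereal y)}"
    unfolding restart_event_def step_passes_def h_def using True by (auto simp: space_pair_measure)
  then have "emeasure noise (Pair z -` restart_event y) = ennreal (exp (- h)) * emeasure noise (survival b K (ereal y))"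
    using emeasure_noise_clock_shift[OF h0 sets_survival] by simp
  moreover have "{a. step_passes b y z a} = {a. h < fst a}" unfolding step_passes_def h_def using True by auto
  ultimately show ?thesis using emeasure_step_noise_clock_gt[OF h0] by simp
qed

lemma restart_event_subset_survival:
  assumes y: "0 < y" and p: "(levels b K z \<omega> n, (\<lambda>k. \<omega> (n + k))) \<in> restart_event y"
  shows "\<omega> \<in> survival b K z"
proof -
  define zn where "zn = levels b K z \<omega> n"
  define h where "h = G (real_of_ereal zn) - G y"
  define \<omega>' where "\<omega>' = case_nat (fst (\<omega> n) - h, snd (\<omega> n)) (\<lambda>j. \<omega> (Suc n + j))"
  have passes: "step_passes b y zn (\<omega> n)" and \<omega>': "\<omega>' \<in> survival b K (ereal y)"
    using p unfolding restart_event_def zn_def[symmetric] h_def[symmetric] \<omega>'_def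
    by (simp_all add: space_pair_measure h_def)
  then have zn: "ereal y \<le> zn" "zn < \<infinity>" "h < fst (\<omega> n)" unfolding step_passes_def h_def by auto
  have "levels b K z \<omega> k \<noteq> 0" for k
  proof (cases "k \<le> n")
    case True
    then show ?thesis using levels_absorbed[of b K z \<omega> k n] zn(1) y unfolding zn_def by force
  next
    case False
    then obtain j where k: "k = Suc n + j" by (metis add_Suc less_imp_Suc_add not_le)
    have "levels b K z \<omega> (Suc n) = next_level b K (\<omega> n) zn" by (simp add: zn_def)
    also have "\<dots> = next_level b K (\<omega>' 0) (ereal y)"
      using next_level_restart[OF y zn(1,2), of "fst (\<omega> n)" "snd (\<omega> n)"] zn(3)
      unfolding h_def \<omega>'_def by simp
    finally have "levels b K z \<omega> k = levels b K (ereal y) \<omega>' (Suc j)"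
      unfolding k levels_add levels_Suc_shift[of _ _ _ \<omega>'] by (simp add: \<omega>'_def)
    then show ?thesis using \<omega>' unfolding survival_def by (simp del: levels.simps)
  qed
  then show ?thesis unfolding survival_def by simp
qed

lemma emeasure_survival_restart:
  assumes y: "0 < y"
  shows "emeasure noise {\<omega>. step_passes b y (levels b K z \<omega> n) (\<omega> n)} * emeasure noise (survival b K (ereal y))
    \<le> emeasure noise (survival b K z)"
proof -
  have "emeasure noise {\<omega>. step_passes b y (levels b K z \<omega> n) (\<omega> n)} * emeasure noise (survival b K (ereal y)) =
      (\<integral>\<^sup>+\<omega>. emeasure step_noise {a. step_passes b y (levels b K z \<omega> n) a} *
         emeasure noise (survival b K (ereal y)) \<partial>noise)"
    unfolding emeasure_step_event[OF pred_step_passes]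
    using measurable_emeasure_step_slice[OF pred_step_passes] by (intro nn_integral_multc[symmetric]) simp
  also have "\<dots> = (\<integral>\<^sup>+\<omega>. emeasure noise (Pair (levels b K z \<omega> n) -` restart_event y) \<partial>noise)"
    by (simp only: emeasure_restart_event_slice[OF y])
  also have "\<dots> = emeasure noise {\<omega>. (levels b K z \<omega> n, (\<lambda>k. \<omega> (n + k))) \<in> restart_event y}"
    by (rule emeasure_levels_shift[OF sets_restart_event, symmetric])
  also have "\<dots> \<le> emeasure noise (survival b K z)"
    using restart_event_subset_survival[OF y] by (intro emeasure_mono sets_survival) auto
  finally show ?thesis .
qed

end

section \<open>The contour process along a fixed noise path\<close>

locale contour_path = splitting_params +
  fixes x :: real and \<omega> :: "nat \<Rightarrow> real \<times> real"
  assumes x_nonneg: "0 \<le> x"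
begin

abbreviation "Z n \<equiv> levels b K (ereal x) \<omega> n"
abbreviation "T n \<equiv> jump_times b K (ereal x) \<omega> n"

lemma valid_level_Z: "valid_level (Z n)"
  by (rule valid_level_levels) (use x_nonneg in \<open>simp add: valid_level_def\<close>)

lemma T_Suc: "T (Suc n) = (if Z n = 0 \<or> Z n = \<infinity> then \<infinity> else T n + ereal (step_duration b (\<omega> n) (Z n)))"
  by (simp add: next_time_def)

lemma T_nonneg: "0 \<le> T n"
  by (induction n) (use step_duration_bounds in \<open>auto simp: next_time_def\<close>)

lemma T_mono: "m \<le> n \<Longrightarrow> T m \<le> T n"
proof (rule lift_Suc_mono_le[of T])
  show "T k \<le> T (Suc k)" for k
    using step_duration_bounds[of "\<omega> k" "Z k"] T_nonneg[of k]
    by (cases "T k") (auto simp: T_Suc simp del: jump_times.simps)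
qed

lemma T_finite: "(\<forall>k<n. Z k \<noteq> 0 \<and> Z k \<noteq> \<infinity>) \<Longrightarrow> T n < \<infinity>"
  by (induction n) (auto simp: next_time_def)

lemma T_Suc_finite:
  "Z m \<noteq> 0 \<Longrightarrow> Z m \<noteq> \<infinity> \<Longrightarrow> T m = ereal \<tau> \<Longrightarrow> T (Suc m) = ereal (\<tau> + step_duration b (\<omega> m) (Z m))"
  by (simp add: T_Suc del: jump_times.simps)

lemma T_Suc_minf:
  assumes "Z n = -\<infinity>"
  shows "T (Suc n) = T n"
proof -
  have "step_duration b (\<omega> n) (Z n) = 0" using step_duration_bounds[of "\<omega> n" "Z n"] assms by simp
  then show ?thesis using assms by (simp add: T_Suc zero_ereal_def[symmetric] del: jump_times.simps)
qed

lemma contour_segment: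
  assumes t: "ereal t < T (Suc m)" "T m \<le> ereal t"
  shows "contour b K x \<omega> t = (if Z m = \<infinity> then \<infinity> else if Z m = 0 then 0 else Z m - (ereal t - T m))"
proof -
  have "(LEAST n. ereal t < T (Suc n)) = m"
  proof (rule Least_equality)
    show "ereal t < T (Suc m)" by (rule t(1))
    show "m \<le> k" if "ereal t < T (Suc k)" for k
    proof (rule ccontr)
      assume "\<not> m \<le> k"
      then have "T (Suc k) \<le> T m" by (intro T_mono) simp
      then show False using that t(2) by simp
    qed
  qed
  moreover have "\<exists>n. ereal t < T (Suc n)" using t(1) by blast
  ultimately show ?thesis unfolding contour_def chain_eq[OF x_nonneg] prod.sel by (simp only: Let_def if_True)
qed

lemma contour_after_explosion:
  assumes "\<forall>n. \<not> ereal t < T (Suc n)"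
  shows "contour b K x \<omega> t = \<infinity>"
  unfolding contour_def chain_eq[OF x_nonneg] prod.sel using assms by simp

lemma contour_segment_cases:
  assumes "0 \<le> t"
  obtains "\<forall>n. \<not> ereal t < T (Suc n)" | m where "ereal t < T (Suc m)" "T m \<le> ereal t"
proof (cases "\<exists>n. ereal t < T (Suc n)")
  case True
  define m where "m = (LEAST n. ereal t < T (Suc n))"
  have m: "ereal t < T (Suc m)" unfolding m_def using True by (metis LeastI)
  have "T m \<le> ereal t"
  proof (cases m)
    case (Suc k)
    then have "\<not> ereal t < T (Suc k)" using not_less_Least[of k "\<lambda>n. ereal t < T (Suc n)"] m_def by simp
    then show ?thesis using Suc by simp
  qed (use assms in simp)
  then show ?thesis using m that by blast
qed (use that in blast)

lemma segment_level:
  assumes t: "ereal t < T (Suc m)" "T m \<le> ereal t" and nz: "Z m \<noteq> 0" "Z m \<noteq> \<infinity>"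
  obtains \<rho> \<tau> where "Z m = ereal \<rho>" "0 < \<rho>" "T m = ereal \<tau>" "\<tau> \<le> t"
    "t < \<tau> + step_duration b (\<omega> m) (Z m)" "step_duration b (\<omega> m) (Z m) \<le> \<rho>"
    "contour b K x \<omega> t = ereal (\<rho> - (t - \<tau>))"
proof -
  have "T m < \<infinity>" using t by (auto simp: T_Suc simp del: jump_times.simps)
  then obtain \<tau> where \<tau>: "T m = ereal \<tau>" using T_nonneg[of m] by (cases "T m") auto
  have "Z m \<noteq> -\<infinity>" using T_Suc_minf[of m] t by auto
  then obtain \<rho> where \<rho>: "Z m = ereal \<rho>" "0 < \<rho>" using valid_level_Z[of m] nz unfolding valid_level_def
    by (cases "Z m") auto
  show ?thesis
  proof (rule that[OF \<rho> \<tau>])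
    show "\<tau> \<le> t" using t \<tau> by simp
    show "t < \<tau> + step_duration b (\<omega> m) (Z m)" using t nz \<tau> by (simp add: T_Suc del: jump_times.simps)
    show "step_duration b (\<omega> m) (Z m) \<le> \<rho>" using step_duration_bounds[of "\<omega> m" "Z m"] \<rho> by simp
    show "contour b K x \<omega> t = ereal (\<rho> - (t - \<tau>))" using contour_segment[OF t] \<rho> \<tau> nz by simp
  qed
qed

lemma first_stop:
  assumes "Z n = 0 \<or> Z n = \<infinity>"
  obtains n0 \<tau> where "Z n0 = 0 \<or> Z n0 = \<infinity>" "\<forall>k<n0. Z k \<noteq> 0 \<and> Z k \<noteq> \<infinity>" "T n0 = ereal \<tau>" "0 \<le> \<tau>"
proof -
  define n0 where "n0 = (LEAST n. Z n = 0 \<or> Z n = \<infinity>)"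
  have stop: "Z n0 = 0 \<or> Z n0 = \<infinity>" unfolding n0_def using assms by (rule LeastI)
  have before: "\<forall>k<n0. Z k \<noteq> 0 \<and> Z k \<noteq> \<infinity>" unfolding n0_def using not_less_Least by blast
  then have "T n0 < \<infinity>" by (rule T_finite)
  then show ?thesis using that[OF stop before] T_nonneg[of n0] by (cases "T n0") auto
qed

lemma contour_stopped:
  assumes "Z n \<in> {0, \<infinity>}" "\<forall>k<n. Z k \<noteq> 0 \<and> Z k \<noteq> \<infinity>" "T n = ereal \<tau>" "\<tau> \<le> t"
  shows "contour b K x \<omega> t = Z n"
  using contour_segment[of t n] assms by (auto simp: T_Suc simp del: jump_times.simps)

lemma absorbed_if_contour_zero:
  assumes t: "0 \<le> t" "contour b K x \<omega> t = 0"
  shows "\<exists>n. Z n = 0"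
proof (rule ccontr)
  assume nz: "\<not> (\<exists>n. Z n = 0)"
  from t(1) show False
  proof (cases rule: contour_segment_cases)
    case 1
    then show False using t(2) contour_after_explosion by simp
  next
    case (2 m)
    show False
    proof (cases "Z m = \<infinity>")
      case True
      then show False using t(2) contour_segment[OF 2] by simp
    next
      case False
      from segment_level[OF 2 _ False] nz obtain \<rho> \<tau> where "0 < \<rho>" "t < \<tau> + step_duration b (\<omega> m) (Z m)"
        "step_duration b (\<omega> m) (Z m) \<le> \<rho>" "contour b K x \<omega> t = ereal (\<rho> - (t - \<tau>))"
        by metis
      then show False using t(2) by simp
    qed
  qed
qed

lemma tau0_finite_iff: "tau0 b K x \<omega> < \<infinity> \<longleftrightarrow> (\<exists>n. Z n = 0)"
proof
  assume "tau0 b K x \<omega> < \<infinity>"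
  then have "{ereal r | r. 0 \<le> r \<and> contour b K x \<omega> r = 0} \<noteq> {}"
    unfolding tau0_def by (metis Inf_empty less_irrefl top_ereal_def)
  then show "\<exists>n. Z n = 0" using absorbed_if_contour_zero by blast
next
  assume "\<exists>n. Z n = 0"
  then obtain n where zn: "Z n = 0" by blast
  then obtain n0 \<tau> where n0: "Z n0 = 0 \<or> Z n0 = \<infinity>" "\<forall>k<n0. Z k \<noteq> 0 \<and> Z k \<noteq> \<infinity>" "T n0 = ereal \<tau>" "0 \<le> \<tau>"
    using first_stop by blast
  have "n0 \<le> n" using n0(2) zn not_le by blast
  then have "Z n0 = 0" using n0(1) zn levels_absorbed[of b K "ereal x" \<omega> n0 n] by auto
  then have "contour b K x \<omega> \<tau> = 0" using contour_stopped[of n0 \<tau> \<tau>] n0 by simp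
  then have "tau0 b K x \<omega> \<le> ereal \<tau>" unfolding tau0_def using n0(4) by (intro Inf_lower) auto
  then show "tau0 b K x \<omega> < \<infinity>" by (rule order.strict_trans1) simp
qed

lemma contour_hits_imp_step_passes:
  assumes y: "0 < y" and t: "0 < t" and c: "contour b K x \<omega> t = ereal y"
  shows "\<exists>m. step_passes b y (Z m) (\<omega> m)"
proof -
  from less_imp_le[OF t] show ?thesis
  proof (cases rule: contour_segment_cases)
    case 1
    then show ?thesis using c contour_after_explosion by simp
  next
    case (2 m)
    have nz: "Z m \<noteq> \<infinity>" "Z m \<noteq> 0" using c contour_segment[OF 2] y by auto
    from segment_level[OF 2 nz(2,1)] obtain \<rho> \<tau> where r: "Z m = ereal \<rho>" "0 < \<rho>" "\<tau> \<le> t"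
      "t < \<tau> + step_duration b (\<omega> m) (Z m)" "contour b K x \<omega> t = ereal (\<rho> - (t - \<tau>))"
      by metis
    define e where "e = fst (\<omega> m)"
    define d where "d = t - \<tau>"
    have d: "0 \<le> d" "d < step_duration b (\<omega> m) (Z m)" "y = \<rho> - d" using r c unfolding d_def by auto
    have "G \<rho> - G y < e"
    proof (cases "G \<rho> < e")
      case True
      then show ?thesis using cum_rate_nonneg[of y] by simp
    next
      case False
      then have "d < jump_descent b e \<rho>" using d r by (simp add: step_duration_def e_def)
      then have "hazard b \<rho> d < e" by (rule hazard_less_before_jump[OF d(1)])
      moreover have "d \<le> \<rho>" using d y by simp
      ultimately show ?thesis using d by (simp add: hazard_eq_cum_rate)
    qed
    then have "step_passes b y (Z m) (\<omega> m)" unfolding step_passes_def e_def using r d by simp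
    then show ?thesis by blast
  qed
qed

end

section \<open>Absorption or escape of a path\<close>

text \<open>\<open>Z n - (T (Suc n) - T n)\<close> is the lowest point of the n-th segment of the contour, so the last
  alternative says that these minima tend to infinity.\<close>
definition stops_or_escapes :: "(real \<Rightarrow> real) \<Rightarrow> (real \<Rightarrow> ereal measure) \<Rightarrow> real
    \<Rightarrow> (nat \<Rightarrow> real \<times> real) \<Rightarrow> bool" where
  "stops_or_escapes b K x \<omega> \<longleftrightarrow>
     (\<exists>n. levels b K (ereal x) \<omega> n = 0 \<or> levels b K (ereal x) \<omega> n = \<infinity>) \<or>
     (\<exists>B::nat. \<forall>n. jump_times b K (ereal x) \<omega> n \<le> ereal (real B)) \<or>
     (\<forall>M::nat. \<exists>N. \<forall>n\<ge>N. jump_times b K (ereal x) \<omega> n < jump_times b K (ereal x) \<omega> (Suc n) \<longrightarrow>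
        ereal (real M) \<le> levels b K (ereal x) \<omega> n -
          (jump_times b K (ereal x) \<omega> (Suc n) - jump_times b K (ereal x) \<omega> n))"

lemma tendsto_PInfty_nat_bounds:
  assumes "\<And>M::nat. eventually (\<lambda>t. ereal (real M) \<le> f t) F"
  shows "(f \<longlongrightarrow> \<infinity>) F"
proof (subst tendsto_PInfty, intro allI)
  fix r :: real
  obtain M :: nat where M: "r < real M" using reals_Archimedean2 by blast
  show "eventually (\<lambda>t. ereal r < f t) F"
    using assms[of M] by eventually_elim (use M in \<open>auto intro: less_le_trans[of _ "ereal (real M)"]\<close>)
qed

context contour_path
begin

lemma tendsto_contour_jump_to_infinity:
  assumes "\<exists>n. Z n = \<infinity>" and nz: "\<forall>n. Z n \<noteq> 0"
  shows "((\<lambda>t. contour b K x \<omega> t) \<longlongrightarrow> \<infinity>) at_top"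
proof -
  from assms obtain n0 \<tau> where n0: "Z n0 = 0 \<or> Z n0 = \<infinity>" "\<forall>k<n0. Z k \<noteq> 0 \<and> Z k \<noteq> \<infinity>" "T n0 = ereal \<tau>"
    by (metis first_stop)
  then have "contour b K x \<omega> t = \<infinity>" if "\<tau> \<le> t" for t
    using contour_stopped[of n0 \<tau> t] nz that by auto
  then have "eventually (\<lambda>t. contour b K x \<omega> t = \<infinity>) at_top"
    unfolding eventually_at_top_linorder by blast
  then show ?thesis by (rule tendsto_eventually)
qed

lemma tendsto_contour_explosion:
  assumes "\<forall>n. T n \<le> ereal B"
  shows "((\<lambda>t. contour b K x \<omega> t) \<longlongrightarrow> \<infinity>) at_top"
proof -
  have "contour b K x \<omega> t = \<infinity>" if "B < t" for t
  proof (rule contour_after_explosion, intro allI)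
    fix n
    have "T (Suc n) \<le> ereal B" using assms by blast
    also have "ereal B < ereal t" using that by simp
    finally have "T (Suc n) < ereal t" .
    then show "\<not> ereal t < T (Suc n)" by (simp del: jump_times.simps)
  qed
  then have "eventually (\<lambda>t. contour b K x \<omega> t = \<infinity>) at_top"
    unfolding eventually_at_top_dense by blast
  then show ?thesis by (rule tendsto_eventually)
qed

lemma tendsto_contour_escape:
  assumes nz: "\<forall>n. Z n \<noteq> 0 \<and> Z n \<noteq> \<infinity>"
    and esc: "\<forall>M::nat. \<exists>N. \<forall>n\<ge>N. T n < T (Suc n) \<longrightarrow> ereal (real M) \<le> Z n - (T (Suc n) - T n)"
  shows "((\<lambda>t. contour b K x \<omega> t) \<longlongrightarrow> \<infinity>) at_top"
proof (rule tendsto_PInfty_nat_bounds)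
  fix M :: nat
  obtain N where N: "\<forall>n\<ge>N. T n < T (Suc n) \<longrightarrow> ereal (real M) \<le> Z n - (T (Suc n) - T n)"
    using esc by blast
  have "T N < \<infinity>" using T_finite nz by blast
  then obtain \<tau>N where \<tau>N: "T N = ereal \<tau>N" "0 \<le> \<tau>N" using T_nonneg[of N] by (cases "T N") auto
  have "ereal (real M) \<le> contour b K x \<omega> t" if t: "\<tau>N \<le> t" for t
  proof -
    from order.trans[OF \<tau>N(2) t] show ?thesis
    proof (cases rule: contour_segment_cases)
      case 1
      then show ?thesis using contour_after_explosion by simp
    next
      case (2 m)
      have "N \<le> m"
      proof (rule ccontr)
        assume "\<not> N \<le> m"
        then have "T (Suc m) \<le> T N" by (intro T_mono) simp
        moreover have "T N \<le> ereal t" using \<tau>N t by simp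
        ultimately show False using 2(1) by (meson leD order.trans)
      qed
      moreover have "T m < T (Suc m)" using 2 by simp
      ultimately have bound: "ereal (real M) \<le> Z m - (T (Suc m) - T m)" using N by blast
      from segment_level[OF 2] nz obtain \<rho> \<tau> where r: "Z m = ereal \<rho>" "T m = ereal \<tau>" "\<tau> \<le> t"
        "t < \<tau> + step_duration b (\<omega> m) (Z m)" "contour b K x \<omega> t = ereal (\<rho> - (t - \<tau>))"
        by metis
      have "T (Suc m) = ereal (\<tau> + step_duration b (\<omega> m) (Z m))" using T_Suc_finite r(2) nz by blast
      then have "real M \<le> \<rho> - step_duration b (\<omega> m) (Z m)" using bound r by simp
      then show ?thesis using r by simp
    qed
  qed
  then show "eventually (\<lambda>t. ereal (real M) \<le> contour b K x \<omega> t) at_top"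
    unfolding eventually_at_top_linorder by blast
qed

lemma escape_if_tendsto_contour:
  assumes nz: "\<forall>n. Z n \<noteq> 0 \<and> Z n \<noteq> \<infinity>" and unbounded: "\<not> (\<exists>B::nat. \<forall>n. T n \<le> ereal (real B))"
    and lim: "((\<lambda>t. contour b K x \<omega> t) \<longlongrightarrow> \<infinity>) at_top"
  shows "\<forall>M::nat. \<exists>N. \<forall>n\<ge>N. T n < T (Suc n) \<longrightarrow> ereal (real M) \<le> Z n - (T (Suc n) - T n)"
proof (rule ccontr)
  assume "\<not> ?thesis"
  then obtain M :: nat where M: "\<forall>N. \<exists>n\<ge>N. T n < T (Suc n) \<and> Z n - (T (Suc n) - T n) < ereal (real M)"
    by (auto simp: not_le)
  have "eventually (\<lambda>t. ereal (real M + 1) < contour b K x \<omega> t) at_top"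
    using lim by (simp add: tendsto_PInfty)
  then obtain t0 where t0: "\<And>t. t0 \<le> t \<Longrightarrow> ereal (real M + 1) < contour b K x \<omega> t"
    unfolding eventually_at_top_linorder by blast
  obtain B :: nat where B: "max t0 0 \<le> real B" using real_arch_simple by blast
  obtain N where TN: "ereal (real B) < T N" using unbounded by (auto simp: not_le)
  obtain n where n: "N \<le> n" "T n < T (Suc n)" "Z n - (T (Suc n) - T n) < ereal (real M)" using M by blast
  have "T n < \<infinity>" using T_finite nz by blast
  then obtain \<tau> where \<tau>: "T n = ereal \<tau>" using T_nonneg[of n] by (cases "T n") auto
  have "Z n \<noteq> -\<infinity>" using T_Suc_minf[of n] n(2) by auto
  then obtain \<rho> where \<rho>: "Z n = ereal \<rho>" using valid_level_Z[of n] nz unfolding valid_level_def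
    by (cases "Z n") auto
  define \<delta> where "\<delta> = step_duration b (\<omega> n) (Z n)"
  have TS: "T (Suc n) = ereal (\<tau> + \<delta>)" unfolding \<delta>_def using T_Suc_finite[OF _ _ \<tau>] nz by blast
  then have \<delta>0: "0 < \<delta>" and low: "\<rho> - \<delta> < real M" using n(2,3) \<tau> \<rho> by simp_all
  define t where "t = \<tau> + \<delta> - min \<delta> 1 / 2"
  have tt: "\<tau> < t" "t < \<tau> + \<delta>" unfolding t_def using \<delta>0 by (auto simp: min_def)
  have "T N \<le> ereal \<tau>" using T_mono[OF n(1)] \<tau> by simp
  then have "ereal (real B) < ereal \<tau>" by (rule order.strict_trans2[OF TN])
  then have "real B < \<tau>" by simp
  then have "t0 \<le> t" using B tt by simp
  have seg: "ereal t < T (Suc n)" "T n \<le> ereal t" using tt TS \<tau> by auto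
  have "\<rho> \<noteq> 0" using nz \<rho> by (metis zero_ereal_def)
  then have "contour b K x \<omega> t = ereal (\<rho> - (t - \<tau>))"
    using contour_segment[OF seg] \<rho> \<tau> by simp
  moreover have "\<rho> - (t - \<tau>) < real M + 1" using low unfolding t_def by (auto simp: min_def)
  ultimately show False using t0[OF \<open>t0 \<le> t\<close>] by simp
qed

lemma tau0_finite_or_tendsto_iff:
  "(tau0 b K x \<omega> < \<infinity> \<or> ((\<lambda>t. contour b K x \<omega> t) \<longlongrightarrow> \<infinity>) at_top) \<longleftrightarrow> stops_or_escapes b K x \<omega>"
proof
  assume "tau0 b K x \<omega> < \<infinity> \<or> ((\<lambda>t. contour b K x \<omega> t) \<longlongrightarrow> \<infinity>) at_top"
  then show "stops_or_escapes b K x \<omega>"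
    using escape_if_tendsto_contour tau0_finite_iff unfolding stops_or_escapes_def by blast
next
  assume "stops_or_escapes b K x \<omega>"
  then consider "\<exists>n. Z n = 0" | "\<forall>n. Z n \<noteq> 0" "\<exists>n. Z n = \<infinity>" | B :: nat where "\<forall>n. T n \<le> ereal (real B)"
    | "\<forall>n. Z n \<noteq> 0 \<and> Z n \<noteq> \<infinity>"
      "\<forall>M::nat. \<exists>N. \<forall>n\<ge>N. T n < T (Suc n) \<longrightarrow> ereal (real M) \<le> Z n - (T (Suc n) - T n)"
    unfolding stops_or_escapes_def by blast
  then show "tau0 b K x \<omega> < \<infinity> \<or> ((\<lambda>t. contour b K x \<omega> t) \<longlongrightarrow> \<infinity>) at_top"
    by cases (use tau0_finite_iff tendsto_contour_jump_to_infinity tendsto_contour_explosion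
        tendsto_contour_escape in blast)+
qed

text \<open>A step that does not pass below M ends its descent above M.\<close>
lemma stops_or_escapes_if_eventually_above:
  assumes above: "\<forall>M::nat. eventually (\<lambda>n. \<not> step_below b (real M) (Z n) (\<omega> n)) sequentially"
  shows "stops_or_escapes b K x \<omega>"
proof (cases "\<exists>n. Z n = 0 \<or> Z n = \<infinity>")
  case False
  then have nz: "\<forall>n. Z n \<noteq> 0 \<and> Z n \<noteq> \<infinity>" by auto
  have "\<exists>N. \<forall>n\<ge>N. T n < T (Suc n) \<longrightarrow> ereal (real M) \<le> Z n - (T (Suc n) - T n)" for M :: nat
  proof -
    obtain N where N: "\<forall>n\<ge>N. \<not> step_below b (real M) (Z n) (\<omega> n)"
      using above unfolding eventually_sequentially by blast
    have "ereal (real M) \<le> Z n - (T (Suc n) - T n)" if n: "N \<le> n" "T n < T (Suc n)" for n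
    proof -
      have "T n < \<infinity>" using T_finite nz by blast
      then obtain \<tau> where \<tau>: "T n = ereal \<tau>" using T_nonneg[of n] by (cases "T n") auto
      have "Z n \<noteq> -\<infinity>" using T_Suc_minf[of n] n(2) by auto
      then have "0 < Z n" using valid_level_Z[of n] nz unfolding valid_level_def
        by (auto simp: order.order_iff_strict)
      then obtain \<rho> where \<rho>: "Z n = ereal \<rho>" "0 < \<rho>" using nz by (cases "Z n") auto
      define e where "e = fst (\<omega> n)"
      have "real M < \<rho>" "e \<le> G \<rho> - G (real M)"
        using N n \<rho> unfolding step_below_def e_def by auto
      moreover have "hazard b \<rho> (\<rho> - real M) = G \<rho> - G (real M)"
        using \<open>real M < \<rho>\<close> by (subst hazard_eq_cum_rate) auto
      ultimately have "jump_descent b e \<rho> \<le> \<rho> - real M"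
        by (intro jump_descent_le) auto
      moreover have "step_duration b (\<omega> n) (Z n) = jump_descent b e \<rho>"
        using \<open>e \<le> G \<rho> - G (real M)\<close> cum_rate_nonneg[of "real M"] \<rho>
        by (simp add: step_duration_def e_def)
      moreover have "T (Suc n) = ereal (\<tau> + step_duration b (\<omega> n) (Z n))"
        using T_Suc_finite[OF _ _ \<tau>] nz by blast
      ultimately show ?thesis using \<rho> \<tau> by simp
    qed
    then show ?thesis by blast
  qed
  then show ?thesis unfolding stops_or_escapes_def by blast
qed (auto simp: stops_or_escapes_def)

end

context splitting_params
begin

lemma contour_pathI: "0 \<le> x \<Longrightarrow> contour_path b K x"
  unfolding contour_path_def contour_path_axioms_def using splitting_params_axioms by simp

lemma prob_tau0_finite_or_tendsto_infinity:
  assumes x: "0 \<le> x"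
  shows "measure noise {\<omega> \<in> space noise. tau0 b K x \<omega> < \<infinity> \<or> ((\<lambda>t. contour b K x \<omega> t) \<longlongrightarrow> \<infinity>) at_top} = 1"
proof -
  interpret prob_space noise by (rule prob_space_noise)
  have "AE \<omega> in noise. \<forall>M::nat. eventually (\<lambda>n. \<not> step_below b (real M) (levels b K (ereal x) \<omega> n) (\<omega> n)) sequentially"
    by (subst AE_all_countable) (intro allI AE_eventually_not_step_below, simp)
  then have "AE \<omega> in noise. stops_or_escapes b K x \<omega>"
    by eventually_elim (rule contour_path.stops_or_escapes_if_eventually_above[OF contour_pathI[OF x]])
  moreover have "{\<omega> \<in> space noise. stops_or_escapes b K x \<omega>} \<in> sets noise"
    unfolding stops_or_escapes_def by measurable
  ultimately have "measure noise {\<omega> \<in> space noise. stops_or_escapes b K x \<omega>} = 1"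
    using prob_Collect_eq_1[of "stops_or_escapes b K x"] by simp
  then show ?thesis using contour_path.tau0_finite_or_tendsto_iff[OF contour_pathI[OF x]] by simp
qed

lemma tau0_infinite_eq_survival:
  assumes "0 \<le> x"
  shows "{\<omega> \<in> space noise. tau0 b K x \<omega> = \<infinity>} = survival b K (ereal x)"
  using contour_path.tau0_finite_iff[OF contour_pathI[OF assms]]
  unfolding survival_def by (auto simp: less_top[symmetric] top_ereal_def)

lemma survival_positive_if_reachable:
  assumes x: "0 < x" and y: "0 < y"
    and reach: "measure noise {\<omega> \<in> space noise. \<exists>t>0. contour b K x \<omega> t = ereal y} > 0"
    and survive: "measure noise (survival b K (ereal y)) > 0"
  shows "measure noise (survival b K (ereal x)) > 0"
proof -
  interpret prob_space noise by (rule prob_space_noise)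
  define H where "H = {\<omega> \<in> space noise. \<exists>t>0. contour b K x \<omega> t = ereal y}"
  define P where "P n = {\<omega>. step_passes b y (levels b K (ereal x) \<omega> n) (\<omega> n)}" for n
  have H_sets: "H \<in> sets noise" using reach measure_notin_sets[of H noise] unfolding H_def by force
  have "P n = {\<omega> \<in> space noise. step_passes b y (levels b K (ereal x) \<omega> n) (\<omega> n)}" for n
    by (simp add: P_def)
  also have "\<dots> n \<in> sets noise" for n unfolding step_passes_def by measurable
  finally have P_sets: "P n \<in> sets noise" for n .
  have "H \<subseteq> (\<Union>n. P n)"
    using contour_path.contour_hits_imp_step_passes[OF contour_pathI y] x unfolding H_def P_def by auto
  moreover have "emeasure noise H \<noteq> 0" using reach by (simp add: H_def emeasure_eq_measure)
  ultimately have "emeasure noise (\<Union>n. P n) \<noteq> 0"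
    using emeasure_mono[of H "\<Union>n. P n" noise] P_sets by (auto simp: sets.countable_UN)
  then obtain n where "emeasure noise (P n) \<noteq> 0" using emeasure_UN_eq_0[of noise P] P_sets by auto
  then have "0 < emeasure noise (P n) * emeasure noise (survival b K (ereal y))"
    using survive by (simp add: emeasure_eq_measure ennreal_zero_less_mult_iff zero_less_measure_iff)
  also have "\<dots> \<le> emeasure noise (survival b K (ereal x))"
    unfolding P_def by (rule emeasure_survival_restart[OF y])
  finally show ?thesis by (simp add: emeasure_eq_measure)
qed

end

theorem theorem5p2:
  fixes b :: "real \<Rightarrow> real" and K :: "real \<Rightarrow> ereal measure"
  assumes b_meas: "b \<in> borel_measurable (restrict_space borel {0..})"
    and b_nonneg: "\<forall>x\<ge>0. 0 \<le> b x"
    and b_locbdd: "\<forall>c\<ge>0. \<exists>B. \<forall>x\<in>{0..c}. b x \<le> B"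
    and K_prob: "\<forall>x\<ge>0. prob_space (K x) \<and> sets (K x) = sets borel"
    and K_pos: "\<forall>x\<ge>0. emeasure (K x) {..0} = 0"
    and K_meas: "\<forall>A\<in>sets (borel :: ereal measure).
                   (\<lambda>x. emeasure (K x) A) \<in> borel_measurable (restrict_space borel {0..})"
    and K_cont: "\<forall>f :: ereal \<Rightarrow> real. continuous_on UNIV f \<and> bounded (range f) \<longrightarrow>
                   continuous_on {0..} (\<lambda>x. integral\<^sup>L (K x) f)"
    and irred: "\<forall>x>0. \<forall>y>0.
                  measure noise {\<omega>\<in>space noise. \<exists>t>0. contour b K x \<omega> t = ereal y} > 0"
  shows "(\<forall>x\<ge>0. measure noise {\<omega>\<in>space noise. tau0 b K x \<omega> < \<infinity> \<or>
                    ((\<lambda>t. contour b K x \<omega> t) \<longlongrightarrow> \<infinity>) at_top} = 1)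
       \<and> ((\<exists>x>0. measure noise {\<omega>\<in>space noise. tau0 b K x \<omega> = \<infinity>} > 0) \<longleftrightarrow>
          (\<forall>x>0. measure noise {\<omega>\<in>space noise. tau0 b K x \<omega> = \<infinity>} > 0))"
proof -
  interpret splitting_params b K
    using b_meas b_nonneg b_locbdd K_prob K_pos K_meas by unfold_locales
  have "measure noise {\<omega>\<in>space noise. tau0 b K x \<omega> = \<infinity>} > 0"
    if "0 < x" "0 < y" "measure noise {\<omega>\<in>space noise. tau0 b K y \<omega> = \<infinity>} > 0" for x y
    using survival_positive_if_reachable[OF that(1,2)] irred that tau0_infinite_eq_survival by simp
  then show ?thesis using prob_tau0_finite_or_tendsto_infinity by (meson zero_less_one)
qed

end
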